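(* For any constant $c > 0$, consider RLS-GP with $F = \{\mathrm{AND}, \mathrm{OR}\}$, $L = \{x_1, \ldots, x_n\}$, a tree size limit $\ell \ge n$, using in each iteration a fresh training set of $s = n^c \lg^2 n$ inputs sampled uniformly at random from $\{0,1\}^n$ to evaluate solution quality, and terminating (returning its current solution) when the sampled error of its current solution is at most $c' \lg n$, where $c'$ is an appropriately large constant. For the target $\mathrm{AND}_n$, and likewise for the target $\mathrm{OR}_n$, with probability at least $1 - O(\log^2(n)/n)$ the algorithm terminates within $O(\log n)$ iterations and returns a solution with generalisation error at most $n^{-c}$.
   Context: Programs are finite rooted binary trees (the empty tree is allowed) whose internal nodes are labelled by binary Boolean functions from $F$ and whose leaves are labelled by literals from $L$; a program computes a Boolean function of $(x_1,\dots,x_n)$ in the obvious way. $\mathrm{AND}_n(x) = x_1 \wedge \dots \wedge x_n$, $\mathrm{OR}_n(x) = x_1 \vee \dots \vee x_n$; $h$ denotes the target. The generalisation error of $X$ is $|\{x \in \{0,1\}^n : X(x) \ne h(x)\}|/2^n$. In each iteration a fresh training set of $s$ inputs is drawn independently and uniformly at random from $\{0,1\}^n$; the sampled error $f(X)$ of a program $X$ in that iteration is the number of sampled inputs on which $X$ differs from $h$; parent and offspring are evaluated on the same training set. LeafCount$(X)$ is the number of leaves. HVL-Prime with subtree deletion, applied to a tree $X$: choose $op \in \{\mathrm{INS}, \mathrm{DEL}, \mathrm{SUB}\}$, a literal $l \in L$ and a function $g \in F$, independently and uniformly at random. If $X$ is empty, the result is the single leaf $l$. Otherwise: if $op = \mathrm{INS}$,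 choose a node $x$ of $X$ uniformly at random and replace it by a new node labelled $g$ whose two children are the subtree rooted at $x$ and a new leaf $l$, in uniformly random order; if $op = \mathrm{DEL}$, choose a node $x$ of $X$ (leaf or internal) uniformly at random and replace the parent of $x$ by the sibling of $x$; if $op = \mathrm{SUB}$, choose a leaf of $X$ uniformly at random and replace it by $l$. RLS-GP with tree size limit $\ell$: start with the empty tree $X$; in each iteration let $X' := $ HVL-Prime$(X)$, and if LeafCount$(X') \le \ell$ and $f(X') \le f(X)$ (sampled errors on the current training set) then set $X := X'$. $\lg$ is the base-2 logarithm; asymptotics are as $n \to \infty$. *)

theory Defs
  imports "HOL-Probability.Probability"
begin

text \<open>Programs: non-empty trees; the possibly empty program is a gp option
  (None = the empty tree). Internal nodes carry True = AND, False = OR.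
  Leaves carry a variable index i < n, standing for the literal x_(i+1).
  Inputs are bool lists of length n.\<close>

datatype gp = Lf nat | Nd bool gp gp

fun evalgp :: "gp \<Rightarrow> bool list \<Rightarrow> bool" where
  "evalgp (Lf i) x = x ! i"
| "evalgp (Nd g l r) x = (if g then evalgp l x \<and> evalgp r x else evalgp l x \<or> evalgp r x)"

text \<open>Convention: the empty program disagrees with the target on every input.\<close>
definition agrees :: "(bool list \<Rightarrow> bool) \<Rightarrow> gp option \<Rightarrow> bool list \<Rightarrow> bool" where
  "agrees h X x = (case X of None \<Rightarrow> False | Some t \<Rightarrow> evalgp t x = h x)"

fun leaves :: "gp \<Rightarrow> nat" where
  "leaves (Lf i) = 1"
| "leaves (Nd g l r) = leaves l + leaves r"

definition leafcount :: "gp option \<Rightarrow> nat" where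
  "leafcount X = (case X of None \<Rightarrow> 0 | Some t \<Rightarrow> leaves t)"

definition ANDn :: "nat \<Rightarrow> bool list \<Rightarrow> bool" where
  "ANDn n x = (\<forall>i<n. x ! i)"

definition ORn :: "nat \<Rightarrow> bool list \<Rightarrow> bool" where
  "ORn n x = (\<exists>i<n. x ! i)"

definition inputs :: "nat \<Rightarrow> bool list set" where
  "inputs n = {x. length x = n}"

definition generr :: "nat \<Rightarrow> (bool list \<Rightarrow> bool) \<Rightarrow> gp option \<Rightarrow> real" where
  "generr n h X = real (card {x \<in> inputs n. \<not> agrees h X x}) / 2 ^ n"

definition serr :: "(bool list \<Rightarrow> bool) \<Rightarrow> gp option \<Rightarrow> bool list list \<Rightarrow> nat" where
  "serr h X S = length (filter (\<lambda>x. \<not> agrees h X x) S)"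

fun samples :: "nat \<Rightarrow> nat \<Rightarrow> bool list list pmf" where
  "samples n 0 = return_pmf []"
| "samples n (Suc k) = do { x \<leftarrow> pmf_of_set (inputs n); xs \<leftarrow> samples n k; return_pmf (x # xs) }"

text \<open>Node positions as paths (False = left child, True = right child).\<close>
fun positions :: "gp \<Rightarrow> bool list set" where
  "positions (Lf i) = {[]}"
| "positions (Nd g l r) = insert [] (Cons False ` positions l \<union> Cons True ` positions r)"

fun leafpos :: "gp \<Rightarrow> bool list set" where
  "leafpos (Lf i) = {[]}"
| "leafpos (Nd g l r) = Cons False ` leafpos l \<union> Cons True ` leafpos r"

fun subt :: "gp \<Rightarrow> bool list \<Rightarrow> gp" where
  "subt t [] = t"
| "subt (Lf i) (_ # _) = Lf i"
| "subt (Nd g l r) (b # p) = (if b then subt r p else subt l p)"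

fun repl :: "gp \<Rightarrow> bool list \<Rightarrow> gp \<Rightarrow> gp" where
  "repl t [] u = u"
| "repl (Lf i) (_ # _) u = Lf i"
| "repl (Nd g l r) (b # p) u = (if b then Nd g l (repl r p u) else Nd g (repl l p u) r)"

datatype mop = INS | DEL | SUB

text \<open>Deleting node x replaces its parent by its sibling; deleting the root
  yields the empty tree.\<close>
definition del_at :: "gp \<Rightarrow> bool list \<Rightarrow> gp option" where
  "del_at t p = (if p = [] then None
     else Some (repl t (butlast p) (subt t (butlast p @ [\<not> last p]))))"

definition hvl :: "nat \<Rightarrow> gp option \<Rightarrow> gp option pmf" where
  "hvl n X = do {
     op \<leftarrow> pmf_of_set {INS, DEL, SUB};
     l \<leftarrow> pmf_of_set {0..<n};
     g \<leftarrow> pmf_of_set {True, False};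
     (case X of
        None \<Rightarrow> return_pmf (Some (Lf l))
      | Some t \<Rightarrow> (case op of
          INS \<Rightarrow> do { p \<leftarrow> pmf_of_set (positions t); b \<leftarrow> pmf_of_set {True, False};
                     return_pmf (Some (repl t p (if b then Nd g (subt t p) (Lf l) else Nd g (Lf l) (subt t p)))) }
        | DEL \<Rightarrow> do { p \<leftarrow> pmf_of_set (positions t); return_pmf (del_at t p) }
        | SUB \<Rightarrow> do { p \<leftarrow> pmf_of_set (leafpos t); return_pmf (Some (repl t p (Lf l))) }))
   }"

text \<open>State: (current program, terminated).\<close>
definition rls_step :: "nat \<Rightarrow> nat \<Rightarrow> nat \<Rightarrow> (bool list \<Rightarrow> bool) \<Rightarrow> real
    \<Rightarrow> gp option \<times> bool \<Rightarrow> (gp option \<times> bool) pmf" where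
  "rls_step n s ell h thr st = (case st of (X, d) \<Rightarrow>
     if d then return_pmf (X, True)
     else do {
       S \<leftarrow> samples n s;
       if real (serr h X S) \<le> thr then return_pmf (X, True)
       else do {
         X' \<leftarrow> hvl n X;
         return_pmf (if leafcount X' \<le> ell \<and> serr h X' S \<le> serr h X S then X' else X, False) } })"

fun rls_run :: "nat \<Rightarrow> nat \<Rightarrow> nat \<Rightarrow> (bool list \<Rightarrow> bool) \<Rightarrow> real \<Rightarrow> nat \<Rightarrow> (gp option \<times> bool) pmf" where
  "rls_run n s ell h thr 0 = return_pmf (None, False)"
| "rls_run n s ell h thr (Suc T) = bind_pmf (rls_run n s ell h thr T) (rls_step n s ell h thr)"

definition ssize :: "real \<Rightarrow> nat \<Rightarrow> nat" where
  "ssize c n = nat \<lceil>real n powr c * (log 2 (real n))\<^sup>2\<rceil>"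

end

theory Submission
  imports Defs "HOL-Library.Multiset" "HOL-Real_Asymp.Real_Asymp"
begin

text \<open>
  We treat AND_n and OR_n together as the n-ary gate with output value b (True for AND,
  False for OR). Starting from a single leaf, the current program stays a pure tree: only
  b-gates over distinct variables. Such a tree with k leaves errs only on inputs where all its
  k variables equal b, so its generalisation error is at most 2^-k. A mutation whose literal is
  fresh (probability (n - k)/n) is improving (a b-gate with a fresh variable is inserted,
  probability at least (n - k)/(6n)), neutral (a leaf is substituted), or harmful: then the
  offspring errs on a subcube of density at least 2^-(k+1) on which the parent is correct,
  and while the parent's error exceeds the threshold, a training set of n^c lg^2 n inputs hits
  that subcube with high probability, so the offspring is rejected. Chernoff bounds on the
  sampled error make premature termination, and failure to terminate once the error is small,
  unlikely. Hence the number of leaves climbs with constant probability per iteration and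
  rarely falls back; after O(log n) iterations it exceeds (c + 1) lg n, where the error is
  below n^-c and the run stops.
\<close>

fun leaf_vars :: "gp \<Rightarrow> nat list" where
  "leaf_vars (Lf i) = [i]"
| "leaf_vars (Nd g l r) = leaf_vars l @ leaf_vars r"

fun gate_labels :: "gp \<Rightarrow> bool set" where
  "gate_labels (Lf i) = {}"
| "gate_labels (Nd g l r) = insert g (gate_labels l \<union> gate_labels r)"

fun outside_vars :: "gp \<Rightarrow> bool list \<Rightarrow> nat list" where
  "outside_vars t [] = []"
| "outside_vars (Lf i) (_ # _) = []"
| "outside_vars (Nd g l r) (d # p) =
     (if d then leaf_vars l @ outside_vars r p else outside_vars l p @ leaf_vars r)"

lemma leaves_eq_length_leaf_vars: "leaves t = length (leaf_vars t)"
  by (induction t) auto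

lemma leaf_vars_not_Nil: "leaf_vars t \<noteq> []"
  by (induction t) auto

lemma finite_positions: "finite (positions t)"
  by (induction t) auto

lemma positions_not_empty: "positions t \<noteq> {}"
  by (cases t) auto

lemma finite_leafpos: "finite (leafpos t)"
  by (induction t) auto

lemma leafpos_not_empty: "leafpos t \<noteq> {}"
  by (induction t) auto

lemma leafpos_subset_positions: "leafpos t \<subseteq> positions t"
  by (induction t) auto

lemma subt_leafpos: "p \<in> leafpos t \<Longrightarrow> \<exists>j. subt t p = Lf j"
  by (induction t arbitrary: p) auto

lemma subt_snoc:
  "q @ [e] \<in> positions t \<Longrightarrow> q \<in> positions t \<and> (\<exists>g u v. subt t q = Nd g u v
     \<and> subt t (q @ [e]) = (if e then v else u) \<and> subt t (q @ [\<not> e]) = (if e then u else v))"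
proof (induction q arbitrary: t)
  case Nil
  then show ?case by (cases t) auto
next
  case (Cons d q)
  then obtain g u v where t: "t = Nd g u v" by (cases t) auto
  show ?case
  proof (cases d)
    case True
    with Cons.prems t have "q @ [e] \<in> positions v" by auto
    from Cons.IH[OF this] show ?thesis using t True by simp
  next
    case False
    with Cons.prems t have "q @ [e] \<in> positions u" by auto
    from Cons.IH[OF this] show ?thesis using t False by simp
  qed
qed

lemma mset_leaf_vars_subt: "mset (leaf_vars t) = mset (outside_vars t p) + mset (leaf_vars (subt t p))"
  by (induction t p rule: outside_vars.induct) auto

lemma mset_leaf_vars_repl:
  "p \<in> positions t \<Longrightarrow> mset (leaf_vars (repl t p w)) = mset (outside_vars t p) + mset (leaf_vars w)"
  by (induction t p rule: outside_vars.induct) auto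

lemma gate_labels_repl: "gate_labels (repl t p w) \<subseteq> gate_labels t \<union> gate_labels w"
  by (induction t p rule: outside_vars.induct) auto

lemma gate_labels_subt: "gate_labels (subt t p) \<subseteq> gate_labels t"
  by (induction t p rule: outside_vars.induct) auto

lemma evalgp_eq_iff_leaf_vars:
  "gate_labels t \<subseteq> {b} \<Longrightarrow> evalgp t x = b \<longleftrightarrow> (\<forall>i\<in>set (leaf_vars t). x ! i = b)"
  by (induction t) auto

lemma evalgp_Nd_eq_label: "evalgp (Nd b u v) x = b \<longleftrightarrow> evalgp u x = b \<and> evalgp v x = b"
  by (cases b) auto

lemma evalgp_Nd_neq_label: "evalgp (Nd (\<not> b) u v) x = b \<longleftrightarrow> evalgp u x = b \<or> evalgp v x = b"
  by (cases b) auto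

lemma evalgp_repl_eq_iff:
  assumes "p \<in> positions t" "gate_labels t \<subseteq> {b}"
  shows "evalgp (repl t p w) x = b \<longleftrightarrow> evalgp w x = b \<and> (\<forall>i\<in>set (outside_vars t p). x ! i = b)"
  using assms
proof (induction t p rule: outside_vars.induct)
  case (3 g l r d p)
  then have "g = b" and l: "evalgp l x = b \<longleftrightarrow> (\<forall>i\<in>set (leaf_vars l). x ! i = b)"
    and r: "evalgp r x = b \<longleftrightarrow> (\<forall>i\<in>set (leaf_vars r). x ! i = b)"
    using evalgp_eq_iff_leaf_vars[of l b x] evalgp_eq_iff_leaf_vars[of r b x] by auto
  show ?case
  proof (cases d)
    case True
    with 3 have "evalgp (repl r p w) x = b \<longleftrightarrow> evalgp w x = b \<and> (\<forall>i\<in>set (outside_vars r p). x ! i = b)"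
      by auto
    moreover have "repl (Nd g l r) (d # p) w = Nd b l (repl r p w)" using True \<open>g = b\<close> by simp
    ultimately show ?thesis using True l unfolding evalgp_Nd_eq_label by auto
  next
    case False
    with 3 have "evalgp (repl l p w) x = b \<longleftrightarrow> evalgp w x = b \<and> (\<forall>i\<in>set (outside_vars l p). x ! i = b)"
      by auto
    moreover have "repl (Nd g l r) (d # p) w = Nd b (repl l p w) r" using False \<open>g = b\<close> by simp
    ultimately show ?thesis using False r unfolding evalgp_Nd_eq_label by auto
  qed
qed auto

section \<open>Pure trees and the effect of a mutation\<close>

text \<open>The invariant of the run. For b = True these are the conjunctions of distinct variables.\<close>

definition pure_tree :: "bool \<Rightarrow> nat \<Rightarrow> gp \<Rightarrow> bool" where
  "pure_tree b n t \<longleftrightarrow> gate_labels t \<subseteq> {b} \<and> distinct (leaf_vars t) \<and> set (leaf_vars t) \<subseteq> {..<n}"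

definition nary_gate :: "bool \<Rightarrow> nat \<Rightarrow> (bool list \<Rightarrow> bool) \<Rightarrow> bool" where
  "nary_gate b n h \<longleftrightarrow> (\<forall>x. h x = b \<longleftrightarrow> (\<forall>i<n. x ! i = b))"

lemma nary_gateD: "nary_gate b n h \<Longrightarrow> h x = b \<longleftrightarrow> (\<forall>i<n. x ! i = b)"
  unfolding nary_gate_def by blast

lemma nary_gate_ANDn: "nary_gate True n (ANDn n)"
  unfolding nary_gate_def ANDn_def by simp

lemma nary_gate_ORn: "nary_gate False n (ORn n)"
  unfolding nary_gate_def ORn_def by simp

lemma card_leaf_vars_pure_tree: "pure_tree b n t \<Longrightarrow> card (set (leaf_vars t)) = leaves t"
  unfolding pure_tree_def leaves_eq_length_leaf_vars by (simp add: distinct_card)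

lemma pure_tree_error:
  assumes "pure_tree b n t" "nary_gate b n h" "\<not> agrees h (Some t) x"
  shows "\<forall>i\<in>set (leaf_vars t). x ! i = b" "h x \<noteq> b"
proof -
  have "h x = b \<Longrightarrow> evalgp t x = b"
    using assms(1) nary_gateD[OF assms(2), of x] evalgp_eq_iff_leaf_vars[of t b x]
    unfolding pure_tree_def by auto
  then show "h x \<noteq> b" "\<forall>i\<in>set (leaf_vars t). x ! i = b"
    using assms evalgp_eq_iff_leaf_vars[of t b x] unfolding agrees_def pure_tree_def by auto
qed

lemma pure_tree_error_mono:
  assumes "pure_tree b n t" "nary_gate b n h" "\<not> agrees h (Some t) x"
    and "gate_labels t' \<subseteq> {b}" "set (leaf_vars t') \<subseteq> set (leaf_vars t)"
  shows "\<not> agrees h (Some t') x"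
  using pure_tree_error[OF assms(1-3)] assms(4,5) evalgp_eq_iff_leaf_vars[of t' b x]
  unfolding agrees_def by auto

definition improving :: "bool \<Rightarrow> nat \<Rightarrow> (bool list \<Rightarrow> bool) \<Rightarrow> gp \<Rightarrow> gp option \<Rightarrow> bool" where
  "improving b n h t X' \<longleftrightarrow> (\<exists>t'. X' = Some t' \<and> pure_tree b n t' \<and> leaves t' = Suc (leaves t)
      \<and> (\<forall>x. \<not> agrees h X' x \<longrightarrow> \<not> agrees h (Some t) x))"

definition neutral :: "bool \<Rightarrow> nat \<Rightarrow> gp \<Rightarrow> gp option \<Rightarrow> bool" where
  "neutral b n t X' \<longleftrightarrow> (\<exists>t'. X' = Some t' \<and> pure_tree b n t' \<and> leaves t' = leaves t)"

definition harmful :: "nat \<Rightarrow> (bool list \<Rightarrow> bool) \<Rightarrow> gp \<Rightarrow> gp option \<Rightarrow> bool" where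
  "harmful n h t X' \<longleftrightarrow> (\<forall>x. \<not> agrees h (Some t) x \<longrightarrow> \<not> agrees h X' x)
     \<and> (\<exists>W f. W \<subseteq> {..<n} \<and> card W \<le> Suc (leaves t)
          \<and> (\<forall>x. (\<forall>i\<in>W. x ! i = f i) \<longrightarrow> agrees h (Some t) x \<and> \<not> agrees h X' x))"

lemma ins_improving:
  assumes pure: "pure_tree b n t" and h: "nary_gate b n h" and p: "p \<in> positions t"
    and l: "l < n" "l \<notin> set (leaf_vars t)"
    and w: "w \<in> {Nd b (subt t p) (Lf l), Nd b (Lf l) (subt t p)}"
  shows "improving b n h t (Some (repl t p w))"
proof -
  let ?t' = "repl t p w"
  have ms: "mset (leaf_vars ?t') = mset (l # leaf_vars t)"
    using mset_leaf_vars_subt[of t p] mset_leaf_vars_repl[OF p, of w] w by auto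
  have "gate_labels w \<subseteq> {b}"
    using gate_labels_subt[of t p] pure w unfolding pure_tree_def by auto
  then have "gate_labels ?t' \<subseteq> {b}"
    using gate_labels_repl[of t p w] pure unfolding pure_tree_def by blast
  moreover have "set (leaf_vars ?t') = insert l (set (leaf_vars t))"
    using mset_eq_setD[OF ms] by simp
  ultimately have pure': "pure_tree b n ?t'"
    using mset_eq_imp_distinct_iff[OF ms] pure l unfolding pure_tree_def by auto
  moreover have "leaves ?t' = Suc (leaves t)"
    using arg_cong[OF ms, of size] by (simp add: leaves_eq_length_leaf_vars)
  moreover have "\<not> agrees h (Some t) x" if "\<not> agrees h (Some ?t') x" for x
    using pure_tree_error_mono[OF pure' h that] pure \<open>set (leaf_vars ?t') = _\<close>
    unfolding pure_tree_def by auto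
  ultimately show ?thesis unfolding improving_def by blast
qed

lemma sub_neutral:
  assumes pure: "pure_tree b n t" and p: "p \<in> leafpos t" and l: "l < n" "l \<notin> set (leaf_vars t)"
  shows "neutral b n t (Some (repl t p (Lf l)))"
proof -
  let ?t' = "repl t p (Lf l)" and ?os = "outside_vars t p"
  obtain j where j: "subt t p = Lf j" using subt_leafpos[OF p] by blast
  have p': "p \<in> positions t" using p leafpos_subset_positions by blast
  have m1: "mset (leaf_vars t) = mset (j # ?os)" using mset_leaf_vars_subt[of t p] j by simp
  have ms: "mset (leaf_vars ?t') = mset (l # ?os)" using mset_leaf_vars_repl[OF p'] by simp
  have "gate_labels ?t' \<subseteq> {b}"
    using gate_labels_repl[of t p "Lf l"] pure unfolding pure_tree_def by auto
  moreover have "distinct (j # ?os)" "set ?os \<subseteq> set (leaf_vars t)"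
    using mset_eq_imp_distinct_iff[OF m1] mset_eq_setD[OF m1] pure unfolding pure_tree_def by auto
  ultimately have "pure_tree b n ?t'"
    using mset_eq_imp_distinct_iff[OF ms] mset_eq_setD[OF ms] pure l unfolding pure_tree_def by auto
  moreover have "leaves ?t' = leaves t"
    using arg_cong[OF ms, of size] arg_cong[OF m1, of size] by (simp add: leaves_eq_length_leaf_vars)
  ultimately show ?thesis unfolding neutral_def by blast
qed

text \<open>The witness subcube fixes every variable of t to b except one variable j of t, set to
  the opposite value, and possibly one further variable l: there t and the target both output
  the opposite of b.\<close>

lemma harmfulI:
  assumes pure: "pure_tree b n t" and h: "nary_gate b n h"
    and j: "j \<in> set (leaf_vars t)" and l: "l < n"
    and errors: "\<And>x. \<not> agrees h (Some t) x \<Longrightarrow> \<not> agrees h X' x"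
    and wrong: "\<And>x. x ! j = (\<not> b) \<Longrightarrow> \<forall>i\<in>insert l (set (leaf_vars t)) - {j}. x ! i = b \<Longrightarrow>
       \<not> agrees h X' x"
  shows "harmful n h t X'"
proof -
  define W where "W = insert l (set (leaf_vars t))"
  define f where "f = (\<lambda>i. if i = j then \<not> b else b)"
  have "W \<subseteq> {..<n}" using pure l unfolding W_def pure_tree_def by auto
  moreover have "card W \<le> Suc (leaves t)"
    using card_insert_le_m1[of "Suc (leaves t)" "set (leaf_vars t)" l]
    unfolding W_def card_leaf_vars_pure_tree[OF pure] by simp
  moreover have "agrees h (Some t) x \<and> \<not> agrees h X' x" if x: "\<forall>i\<in>W. x ! i = f i" for x
  proof
    have xj: "x ! j = (\<not> b)" using x j unfolding W_def f_def by simp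
    have "evalgp t x \<noteq> b"
      using evalgp_eq_iff_leaf_vars[of t b x] xj j pure unfolding pure_tree_def by auto
    moreover have "h x \<noteq> b" using nary_gateD[OF h, of x] xj j pure unfolding pure_tree_def by auto
    ultimately show "agrees h (Some t) x" unfolding agrees_def by auto
    have "\<forall>i\<in>insert l (set (leaf_vars t)) - {j}. x ! i = b"
    proof
      fix i assume "i \<in> insert l (set (leaf_vars t)) - {j}"
      then have "i \<in> W" "i \<noteq> j" unfolding W_def by auto
      with x show "x ! i = b" unfolding f_def by auto
    qed
    then show "\<not> agrees h X' x" by (rule wrong[OF xj])
  qed
  ultimately show ?thesis
    unfolding harmful_def using errors by (intro conjI allI impI exI[of _ W] exI[of _ f]) auto
qed

lemma ins_harmful:
  assumes pure: "pure_tree b n t" and h: "nary_gate b n h" and p: "p \<in> positions t"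
    and l: "l < n" "l \<notin> set (leaf_vars t)"
    and w: "w \<in> {Nd (\<not> b) (subt t p) (Lf l), Nd (\<not> b) (Lf l) (subt t p)}"
  shows "harmful n h t (Some (repl t p w))"
proof -
  let ?t' = "repl t p w" and ?u = "subt t p" and ?os = "outside_vars t p"
  have gates: "gate_labels t \<subseteq> {b}" using pure unfolding pure_tree_def by auto
  have eval_t': "evalgp ?t' x = b \<longleftrightarrow> (evalgp ?u x = b \<or> x ! l = b) \<and> (\<forall>i\<in>set ?os. x ! i = b)" for x
    using evalgp_repl_eq_iff[OF p gates, of w x] w evalgp_Nd_neq_label[of b] by auto
  have "gate_labels ?u \<subseteq> {b}" using gate_labels_subt[of t p] gates by blast
  note eval_u = evalgp_eq_iff_leaf_vars[OF this]
  have ms: "mset (leaf_vars t) = mset (?os @ leaf_vars ?u)" using mset_leaf_vars_subt[of t p] by simp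
  then have vars: "set (leaf_vars t) = set ?os \<union> set (leaf_vars ?u)" and "distinct (?os @ leaf_vars ?u)"
    using mset_eq_setD[OF ms] mset_eq_imp_distinct_iff[OF ms] pure unfolding pure_tree_def by auto
  then have disj: "set ?os \<inter> set (leaf_vars ?u) = {}" by simp
  obtain j where j: "j \<in> set (leaf_vars ?u)" using leaf_vars_not_Nil[of ?u] by (meson list.set_sel(1))
  show ?thesis
  proof (rule harmfulI[OF pure h _ l(1)])
    show "j \<in> set (leaf_vars t)" using j vars by blast
  next
    fix x assume "\<not> agrees h (Some t) x"
    from pure_tree_error[OF pure h this] show "\<not> agrees h (Some ?t') x"
      using eval_t' eval_u vars unfolding agrees_def by auto
  next
    fix x assume xj: "x ! j = (\<not> b)" and x: "\<forall>i\<in>insert l (set (leaf_vars t)) - {j}. x ! i = b"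
    have "h x \<noteq> b" using nary_gateD[OF h, of x] xj j vars pure unfolding pure_tree_def by auto
    moreover have "evalgp ?t' x = b" using eval_t' x disj j l(2) vars by auto
    ultimately show "\<not> agrees h (Some ?t') x" unfolding agrees_def by auto
  qed
qed

lemma harmful_of_fewer_vars:
  assumes pure: "pure_tree b n t" and h: "nary_gate b n h" and gates: "gate_labels t' \<subseteq> {b}"
    and j: "j \<in> set (leaf_vars t)" and vars: "set (leaf_vars t') \<subseteq> set (leaf_vars t) - {j}"
  shows "harmful n h t (Some t')"
proof (rule harmfulI[OF pure h j])
  show "j < n" using j pure unfolding pure_tree_def by auto
  show "\<not> agrees h (Some t') x" if "\<not> agrees h (Some t) x" for x
    using pure_tree_error_mono[OF pure h that gates] vars by blast
  show "\<not> agrees h (Some t') x"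
    if "x ! j = (\<not> b)" "\<forall>i\<in>insert j (set (leaf_vars t)) - {j}. x ! i = b" for x
  proof -
    have "h x \<noteq> b" using nary_gateD[OF h, of x] that(1) \<open>j < n\<close> by auto
    moreover have "evalgp t' x = b" using evalgp_eq_iff_leaf_vars[OF gates] that(2) vars by auto
    ultimately show ?thesis unfolding agrees_def by auto
  qed
qed

lemma del_harmful:
  assumes pure: "pure_tree b n t" and h: "nary_gate b n h" and p: "p \<in> positions t"
  shows "harmful n h t (del_at t p)"
proof (cases "p = []")
  case True
  obtain j where j: "j \<in> set (leaf_vars t)" using leaf_vars_not_Nil[of t] by (meson list.set_sel(1))
  moreover have "j < n" using j pure unfolding pure_tree_def by auto
  ultimately show ?thesis
    using True harmfulI[OF pure h] unfolding del_at_def agrees_def by simp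
next
  case False
  then obtain q e where pq: "p = q @ [e]" by (metis append_butlast_last_id)
  with subt_snoc[of q e t] p obtain g u v where q: "q \<in> positions t" and sq: "subt t q = Nd g u v"
    and removed: "subt t p = (if e then v else u)" and sibling: "subt t (q @ [\<not> e]) = (if e then u else v)"
    by auto
  let ?t' = "repl t q (subt t (q @ [\<not> e]))" and ?os = "outside_vars t q"
  have del: "del_at t p = Some ?t'" using pq unfolding del_at_def by simp
  have gates: "gate_labels ?t' \<subseteq> {b}"
    using gate_labels_repl[of t q] gate_labels_subt[of t] pure unfolding pure_tree_def by blast
  have ms: "mset (leaf_vars t) = mset (?os @ leaf_vars u @ leaf_vars v)"
    using mset_leaf_vars_subt[of t q] sq by simp
  then have dist: "distinct (?os @ leaf_vars u @ leaf_vars v)"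
    and vars: "set (leaf_vars t) = set ?os \<union> set (leaf_vars u) \<union> set (leaf_vars v)"
    using mset_eq_imp_distinct_iff[OF ms] mset_eq_setD[OF ms] pure unfolding pure_tree_def by auto
  obtain j where j: "j \<in> set (leaf_vars (subt t p))"
    using leaf_vars_not_Nil[of "subt t p"] by (meson list.set_sel(1))
  have "set (leaf_vars ?t') = set ?os \<union> set (leaf_vars (subt t (q @ [\<not> e])))"
    using arg_cong[OF mset_leaf_vars_repl[OF q], of set_mset] by simp
  moreover have "j \<in> set (leaf_vars t)" using j removed vars by (auto split: if_splits)
  ultimately have "set (leaf_vars ?t') \<subseteq> set (leaf_vars t) - {j}"
    using vars j removed sibling dist by (auto split: if_splits)
  with \<open>j \<in> set (leaf_vars t)\<close> show ?thesis
    unfolding del by (rule harmful_of_fewer_vars[OF pure h gates])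
qed

lemma measure_pmf_prob_bind:
  "measure_pmf.prob (M \<bind> f) C = measure_pmf.expectation M (\<lambda>x. measure_pmf.prob (f x) C)"
proof -
  have "ennreal (measure_pmf.prob (M \<bind> f) C) = (\<integral>\<^sup>+x. ennreal (measure_pmf.prob (f x) C) \<partial>M)"
    by (simp add: measure_pmf.emeasure_eq_measure[symmetric])
  also have "\<dots> = ennreal (measure_pmf.expectation M (\<lambda>x. measure_pmf.prob (f x) C))"
    by (rule nn_integral_eq_integral) (auto intro!: measure_pmf.integrable_const_bound[where B=1])
  finally show ?thesis by (simp add: integral_nonneg_AE)
qed

lemma measure_pmf_prob_eq_1I: "set_pmf M \<subseteq> C \<Longrightarrow> measure_pmf.prob M C = 1"
  by (subst measure_pmf.prob_eq_1) (auto simp: AE_measure_pmf_iff)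

lemma measure_pmf_prob_ge_1_minus:
  "measure_pmf.prob M {x. \<not> P x} \<le> r \<Longrightarrow> 1 - r \<le> measure_pmf.prob M {x. P x}"
  using measure_pmf.prob_compl[of "{x. \<not> P x}" M]
  by (simp add: Compl_eq_Diff_UNIV[symmetric] Collect_neg_eq[symmetric])

lemma measure_pmf_prob_le_expectation:
  fixes g :: "'a \<Rightarrow> real"
  assumes "finite (set_pmf M)" "\<And>x. 0 \<le> g x" "\<And>x. Q x \<Longrightarrow> 1 \<le> g x"
  shows "measure_pmf.prob M {x. Q x} \<le> measure_pmf.expectation M g"
proof -
  have "measure_pmf.prob M {x. Q x} = measure_pmf.expectation M (indicator {x. Q x})"
    by simp
  also have "\<dots> \<le> measure_pmf.expectation M g"
    by (rule integral_mono) (use assms in \<open>auto intro: integrable_measure_pmf_finite split: split_indicator\<close>)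
  finally show ?thesis .
qed

lemma measure_pmf_prob_bind_pmf_of_set_ge:
  assumes "finite A" "B \<subseteq> A" "B \<noteq> {}" "\<And>a. a \<in> B \<Longrightarrow> q \<le> measure_pmf.prob (f a) C"
  shows "q * card B / card A \<le> measure_pmf.prob (pmf_of_set A \<bind> f) C"
proof -
  have A: "A \<noteq> {}" using assms(2,3) by blast
  have "q * card B = (\<Sum>a\<in>B. q)" by simp
  also have "\<dots> \<le> (\<Sum>a\<in>B. measure_pmf.prob (f a) C)" by (rule sum_mono) (rule assms(4))
  also have "\<dots> \<le> (\<Sum>a\<in>A. measure_pmf.prob (f a) C)"
    by (rule sum_mono2[OF assms(1,2)]) simp
  finally show ?thesis
    unfolding measure_pmf_prob_bind using assms(1) A by (simp add: integral_pmf_of_set divide_right_mono)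
qed

lemma expectation_ge_two_level:
  fixes g :: "'a \<Rightarrow> real"
  assumes "A \<subseteq> B" "\<And>y. y \<in> set_pmf M \<Longrightarrow> y \<in> A \<Longrightarrow> a1 \<le> g y"
    "\<And>y. y \<in> set_pmf M \<Longrightarrow> y \<in> B \<Longrightarrow> a0 \<le> g y" "\<And>y. 0 \<le> g y" "\<And>y. g y \<le> 1"
  shows "a0 * measure_pmf.prob M B + (a1 - a0) * measure_pmf.prob M A \<le> measure_pmf.expectation M g"
proof -
  have int: "integrable (measure_pmf M) (indicator C :: 'a \<Rightarrow> real)" for C
    by (rule measure_pmf.integrable_const_bound[where B=1]) (auto split: split_indicator)
  have "a0 * measure_pmf.prob M B + (a1 - a0) * measure_pmf.prob M A
     = measure_pmf.expectation M (\<lambda>y. a0 * indicator B y + (a1 - a0) * indicator A y)"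
    using int by simp
  also have "\<dots> \<le> measure_pmf.expectation M g"
  proof (rule integral_mono_AE)
    show "integrable (measure_pmf M) g"
      by (rule measure_pmf.integrable_const_bound[where B=1]) (use assms(4,5) in auto)
    show "AE y in M. a0 * indicator B y + (a1 - a0) * indicator A y \<le> g y"
      unfolding AE_measure_pmf_iff
      using assms(1) assms(2,3) assms(4) by (auto split: split_indicator)
  qed (use int in simp)
  finally show ?thesis .
qed

lemma expectation_ge_level:
  fixes g :: "'a \<Rightarrow> real"
  assumes "\<And>y. y \<in> set_pmf M \<Longrightarrow> y \<in> A \<Longrightarrow> a \<le> g y" "\<And>y. 0 \<le> g y" "\<And>y. g y \<le> 1"
  shows "a * measure_pmf.prob M A \<le> measure_pmf.expectation M g"
  using expectation_ge_two_level[of A A M a g a] assms by simp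

section \<open>The distribution of HVL-Prime mutations\<close>

definition hvl_mutation :: "gp \<Rightarrow> mop \<Rightarrow> nat \<Rightarrow> bool \<Rightarrow> gp option pmf" where
  "hvl_mutation t op l g = (case op of
      INS \<Rightarrow> pmf_of_set (positions t) \<bind> (\<lambda>p. pmf_of_set {True, False} \<bind> (\<lambda>d.
               return_pmf (Some (repl t p (if d then Nd g (subt t p) (Lf l) else Nd g (Lf l) (subt t p))))))
    | DEL \<Rightarrow> pmf_of_set (positions t) \<bind> (\<lambda>p. return_pmf (del_at t p))
    | SUB \<Rightarrow> pmf_of_set (leafpos t) \<bind> (\<lambda>p. return_pmf (Some (repl t p (Lf l)))))"

lemma hvl_Some: "hvl n (Some t) = pmf_of_set {INS, DEL, SUB} \<bind> (\<lambda>op.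
    pmf_of_set {0..<n} \<bind> (\<lambda>l. pmf_of_set {True, False} \<bind> (\<lambda>g. hvl_mutation t op l g)))"
  unfolding hvl_def hvl_mutation_def by simp

definition classified :: "bool \<Rightarrow> nat \<Rightarrow> (bool list \<Rightarrow> bool) \<Rightarrow> gp \<Rightarrow> gp option set" where
  "classified b n h t = {X'. improving b n h t X' \<or> neutral b n t X' \<or> harmful n h t X'}"

lemma set_hvl_mutation_classified:
  assumes pure: "pure_tree b n t" and h: "nary_gate b n h" and l: "l < n" "l \<notin> set (leaf_vars t)"
  shows "set_pmf (hvl_mutation t op l g) \<subseteq> classified b n h t"
proof (cases op)
  case INS
  have "Some (repl t p w) \<in> classified b n h t"
    if p: "p \<in> positions t" and w: "w \<in> {Nd g (subt t p) (Lf l), Nd g (Lf l) (subt t p)}" for p w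
  proof (cases "g = b")
    case True
    then show ?thesis using ins_improving[OF pure h p l] w unfolding classified_def by auto
  next
    case False
    then have "g = (\<not> b)" by auto
    then show ?thesis using ins_harmful[OF pure h p l] w unfolding classified_def by auto
  qed
  then show ?thesis
    using INS finite_positions[of t] positions_not_empty[of t] unfolding hvl_mutation_def by auto
next
  case DEL
  then show ?thesis
    using del_harmful[OF pure h] finite_positions[of t] positions_not_empty[of t]
    unfolding classified_def hvl_mutation_def by auto
next
  case SUB
  then show ?thesis
    using sub_neutral[OF pure _ l] finite_leafpos[of t] leafpos_not_empty[of t]
    unfolding classified_def hvl_mutation_def by auto
qed

lemma set_hvl_mutation_improving:
  assumes pure: "pure_tree b n t" and h: "nary_gate b n h" and l: "l < n" "l \<notin> set (leaf_vars t)"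
  shows "set_pmf (hvl_mutation t INS l b) \<subseteq> {X'. improving b n h t X'}"
  using ins_improving[OF pure h _ l] finite_positions[of t] positions_not_empty[of t]
  unfolding hvl_mutation_def by auto

lemma card_fresh_vars:
  assumes "pure_tree b n t"
  shows "card ({0..<n} - set (leaf_vars t)) = n - leaves t"
  using assms card_leaf_vars_pure_tree[OF assms] unfolding pure_tree_def
  by (subst card_Diff_subset) auto

lemma prob_hvl_classified:
  assumes pure: "pure_tree b n t" and h: "nary_gate b n h" and n: "leaves t < n"
  shows "real (n - leaves t) / real n \<le> measure_pmf.prob (hvl n (Some t)) (classified b n h t)"
proof -
  let ?fresh = "{0..<n} - set (leaf_vars t)"
  have fresh: "?fresh \<noteq> {}" using card_fresh_vars[OF pure] n by force
  have "measure_pmf.prob (pmf_of_set {True, False} \<bind> (\<lambda>g. hvl_mutation t op l g))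
      (classified b n h t) = 1" if "l \<in> ?fresh" for l op
    using set_hvl_mutation_classified[OF pure h, of l op] that
    by (intro measure_pmf_prob_eq_1I) auto
  then have "1 * real (card ?fresh) / card {0..<n} \<le> measure_pmf.prob
      (pmf_of_set {0..<n} \<bind> (\<lambda>l. pmf_of_set {True, False} \<bind> (\<lambda>g. hvl_mutation t op l g)))
      (classified b n h t)" for op
    by (intro measure_pmf_prob_bind_pmf_of_set_ge fresh) auto
  then have "(real (n - leaves t) / real n) * card {INS, DEL, SUB} / card {INS, DEL, SUB}
      \<le> measure_pmf.prob (hvl n (Some t)) (classified b n h t)"
    unfolding hvl_Some card_fresh_vars[OF pure]
    by (intro measure_pmf_prob_bind_pmf_of_set_ge) auto
  then show ?thesis by simp
qed

lemma prob_hvl_improving: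
  assumes pure: "pure_tree b n t" and h: "nary_gate b n h" and n: "leaves t < n"
  shows "real (n - leaves t) / (6 * real n) \<le> measure_pmf.prob (hvl n (Some t)) {X'. improving b n h t X'}"
proof -
  let ?fresh = "{0..<n} - set (leaf_vars t)" and ?C = "{X'. improving b n h t X'}"
  have fresh: "?fresh \<noteq> {}" using card_fresh_vars[OF pure] n by force
  have "1 * real (card {b}) / card {True, False} \<le>
      measure_pmf.prob (pmf_of_set {True, False} \<bind> (\<lambda>g. hvl_mutation t INS l g)) ?C"
    if "l \<in> ?fresh" for l
  proof (intro measure_pmf_prob_bind_pmf_of_set_ge)
    show "1 \<le> measure_pmf.prob (hvl_mutation t INS l g) ?C" if "g \<in> {b}" for g
      using set_hvl_mutation_improving[OF pure h, of l] \<open>l \<in> ?fresh\<close> that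
      by (simp add: measure_pmf_prob_eq_1I)
  qed auto
  then have "(1 / 2) * real (card ?fresh) / card {0..<n} \<le> measure_pmf.prob
      (pmf_of_set {0..<n} \<bind> (\<lambda>l. pmf_of_set {True, False} \<bind> (\<lambda>g. hvl_mutation t INS l g))) ?C"
    by (intro measure_pmf_prob_bind_pmf_of_set_ge fresh) auto
  then have "(1 / 2 * real (n - leaves t) / real n) * card {INS} / card {INS, DEL, SUB}
      \<le> measure_pmf.prob (hvl n (Some t)) ?C"
    unfolding hvl_Some card_fresh_vars[OF pure]
    by (intro measure_pmf_prob_bind_pmf_of_set_ge) auto
  then show ?thesis by simp
qed

section \<open>Random training sets\<close>

lemma finite_inputs: "finite (inputs n)"
  using finite_lists_length_eq[of "UNIV :: bool set" n] unfolding inputs_def by simp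

lemma card_inputs: "card (inputs n) = 2 ^ n"
  using card_lists_length_eq[of "UNIV :: bool set" n] unfolding inputs_def by simp

lemma inputs_not_empty: "inputs n \<noteq> {}"
  using card_inputs[of n] by auto

lemma samples_Suc: "samples n (Suc k) = pmf_of_set (inputs n) \<bind> (\<lambda>x. map_pmf ((#) x) (samples n k))"
  by (simp add: map_pmf_def)

lemma set_pmf_samples: "S \<in> set_pmf (samples n s) \<Longrightarrow> length S = s \<and> set S \<subseteq> inputs n"
proof (induction s arbitrary: S)
  case (Suc k)
  then obtain x S' where "x \<in> inputs n" "S' \<in> set_pmf (samples n k)" "S = x # S'"
    by (auto simp: samples_Suc finite_inputs inputs_not_empty)
  with Suc.IH show ?case by auto
qed simp

lemma finite_set_pmf_samples: "finite (set_pmf (samples n s))"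
proof (rule finite_subset)
  show "set_pmf (samples n s) \<subseteq> {S. set S \<subseteq> inputs n \<and> length S = s}"
    using set_pmf_samples by blast
qed (rule finite_lists_length_eq[OF finite_inputs])

definition input_frac :: "nat \<Rightarrow> (bool list \<Rightarrow> bool) \<Rightarrow> real" where
  "input_frac n P = card {x \<in> inputs n. P x} / 2 ^ n"

lemma generr_eq_input_frac: "generr n h X = input_frac n (\<lambda>x. \<not> agrees h X x)"
  unfolding generr_def input_frac_def ..

lemma input_frac_nonneg: "0 \<le> input_frac n P"
  unfolding input_frac_def by simp

lemma input_frac_mono:
  assumes "\<And>x. x \<in> inputs n \<Longrightarrow> P x \<Longrightarrow> Q x"
  shows "input_frac n P \<le> input_frac n Q"
proof -
  have "card {x \<in> inputs n. P x} \<le> card {x \<in> inputs n. Q x}"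
    using assms finite_inputs by (intro card_mono) auto
  then show ?thesis unfolding input_frac_def by (simp add: divide_right_mono)
qed

lemma input_frac_le_1: "input_frac n P \<le> 1"
  using input_frac_mono[of n P "\<lambda>_. True"] unfolding input_frac_def by (simp add: card_inputs)

lemma card_inputs_fixing:
  assumes "W \<subseteq> {..<n}"
  shows "card {x \<in> inputs n. \<forall>i\<in>W. x ! i = f i} = 2 ^ (n - card W)"
proof -
  have "finite W" using assms finite_subset by blast
  then show ?thesis
    using assms
  proof (induction W arbitrary: f)
    case empty
    then show ?case by (simp add: card_inputs)
  next
    case (insert i W)
    define A where "A g = {x \<in> inputs n. \<forall>k\<in>insert i W. x ! k = g k}" for g
    let ?f' = "f(i := \<not> f i)" and ?flip = "\<lambda>x :: bool list. x[i := \<not> x ! i]"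
    have i: "i < n" and W: "W \<subseteq> {..<n}" using insert.prems by auto
    have flip: "?flip x \<in> A ?f'" "?flip (?flip x) = x" if "x \<in> A f" for x
      using that i insert.hyps(2) unfolding A_def inputs_def by (auto simp: list_update_same_conv nth_list_update)
    have flip': "?flip x \<in> A f" "?flip (?flip x) = x" if "x \<in> A ?f'" for x
      using that i insert.hyps(2) unfolding A_def inputs_def by (auto simp: list_update_same_conv nth_list_update)
    have "bij_betw ?flip (A f) (A ?f')"
      by (rule bij_betw_byWitness[where f' = ?flip]) (use flip flip' in auto)
    then have same: "card (A f) = card (A ?f')" by (rule bij_betw_same_card)
    have split: "{x \<in> inputs n. \<forall>k\<in>W. x ! k = f k} = A f \<union> A ?f'"
      using insert.hyps(2) unfolding A_def by auto
    have "A f \<inter> A ?f' = {}" unfolding A_def by auto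
    moreover have "finite (A g)" for g unfolding A_def using finite_inputs by simp
    ultimately have "card (A f \<union> A ?f') = card (A f) + card (A ?f')"
      by (intro card_Un_disjoint) auto
    then have "2 * card (A f) = 2 ^ (n - card W)"
      using insert.IH[OF W, of f] split same by simp
    moreover have "card (insert i W) \<le> n"
      using card_mono[OF _ insert.prems] by simp
    then have "n - card W = Suc (n - card (insert i W))" using insert.hyps by simp
    ultimately show ?case unfolding A_def by simp
  qed
qed

lemma input_frac_fixing:
  assumes "W \<subseteq> {..<n}"
  shows "input_frac n (\<lambda>x. \<forall>i\<in>W. x ! i = f i) = 1 / 2 ^ card W"
proof -
  have "card W \<le> n" using card_mono[OF _ assms] by simp
  then have "(2::real) ^ (n - card W) = 2 ^ n / 2 ^ card W" by (simp add: power_diff)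
  then show ?thesis unfolding input_frac_def card_inputs_fixing[OF assms] by simp
qed

lemma generr_pure_tree_le:
  assumes pure: "pure_tree b n t" and h: "nary_gate b n h"
  shows "generr n h (Some t) \<le> 1 / 2 ^ leaves t"
proof -
  have "generr n h (Some t) \<le> input_frac n (\<lambda>x. \<forall>i\<in>set (leaf_vars t). x ! i = b)"
    unfolding generr_eq_input_frac by (intro input_frac_mono) (use pure_tree_error[OF pure h] in blast)
  also have "\<dots> = 1 / 2 ^ leaves t"
    using input_frac_fixing[of "set (leaf_vars t)" n] pure card_leaf_vars_pure_tree[OF pure]
    unfolding pure_tree_def by simp
  finally show ?thesis .
qed

lemma harmful_witness:
  assumes pure: "pure_tree b n t" and h: "nary_gate b n h" and "harmful n h t X'"
  obtains R where "generr n h (Some t) / 2 \<le> input_frac n R"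
    and "\<And>S. serr h (Some t) S + length (filter R S) \<le> serr h X' S"
proof -
  from assms(3) obtain W f where W: "W \<subseteq> {..<n}" "card W \<le> Suc (leaves t)"
    and witness: "\<And>x. \<forall>i\<in>W. x ! i = f i \<Longrightarrow> agrees h (Some t) x \<and> \<not> agrees h X' x"
    and errors: "\<And>x. \<not> agrees h (Some t) x \<Longrightarrow> \<not> agrees h X' x"
    unfolding harmful_def by blast
  let ?R = "\<lambda>x. \<forall>i\<in>W. x ! i = f i"
  have "generr n h (Some t) / 2 \<le> 1 / 2 ^ Suc (leaves t)"
    using generr_pure_tree_le[OF pure h] by simp
  also have "\<dots> \<le> input_frac n ?R"
    unfolding input_frac_fixing[OF W(1)] using W(2) by (intro divide_left_mono power_increasing) auto
  finally have "generr n h (Some t) / 2 \<le> input_frac n ?R" .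
  moreover have "serr h (Some t) S + length (filter ?R S) \<le> serr h X' S" for S
    unfolding serr_def using witness errors by (induction S) auto
  ultimately show ?thesis using that by blast
qed

lemma expectation_samples_power_count:
  fixes \<theta> :: real
  shows "measure_pmf.expectation (samples n s) (\<lambda>S. \<theta> ^ length (filter P S))
    = (1 - input_frac n P + input_frac n P * \<theta>) ^ s"
proof (induction s)
  case (Suc k)
  let ?q = "input_frac n P" and ?E = "\<lambda>M. measure_pmf.expectation M (\<lambda>S. \<theta> ^ length (filter P S))"
  have cons: "?E (map_pmf ((#) x) (samples n k)) = (if P x then \<theta> else 1) * (1 - ?q + ?q * \<theta>) ^ k" for x
    using Suc.IH by simp
  have "(\<Sum>x\<in>inputs n. if P x then 1 else 0) = real (card {x \<in> inputs n. P x})"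
    using finite_inputs by (simp add: sum.If_cases Int_def conj_commute)
  then have "(\<Sum>x\<in>inputs n. (if P x then \<theta> else 1))
      = (\<Sum>x\<in>inputs n. 1 + (\<theta> - 1) * (if P x then 1 else 0))"
    by (intro sum.cong) auto
  also have "\<dots> = 2 ^ n + (\<theta> - 1) * real (card {x \<in> inputs n. P x})"
    using \<open>(\<Sum>x\<in>inputs n. if P x then 1 else 0) = _\<close>
    by (simp add: sum.distrib sum_distrib_left[symmetric] card_inputs)
  also have "\<dots> = 2 ^ n * (1 - ?q + ?q * \<theta>)"
    unfolding input_frac_def by (simp add: field_simps)
  finally have sum: "(\<Sum>x\<in>inputs n. (if P x then \<theta> else 1)) = 2 ^ n * (1 - ?q + ?q * \<theta>)" .
  have "?E (samples n (Suc k)) = (\<Sum>x\<in>inputs n. ?E (map_pmf ((#) x) (samples n k))) / 2 ^ n"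
    unfolding samples_Suc
    by (subst pmf_expectation_bind_pmf_of_set)
       (auto simp: finite_inputs inputs_not_empty finite_set_pmf_samples card_inputs divide_inverse mult.commute sum_distrib_left)
  also have "\<dots> = (1 - ?q + ?q * \<theta>) ^ Suc k"
    unfolding cons sum_distrib_right[symmetric] sum by simp
  finally show ?case .
qed simp

lemma prob_samples_count_greater:
  assumes "real s * input_frac n P \<le> a / 4"
  shows "measure_pmf.prob (samples n s) {S. a < length (filter P S)} \<le> exp (- a / 2)"
proof -
  let ?q = "input_frac n P"
  have "measure_pmf.prob (samples n s) {S. a < length (filter P S)}
      \<le> measure_pmf.expectation (samples n s) (\<lambda>S. exp 1 ^ length (filter P S) / exp a)"
  proof (rule measure_pmf_prob_le_expectation[OF finite_set_pmf_samples])
    fix S assume "a < length (filter P S)"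
    then have "exp a \<le> exp 1 ^ length (filter P S)" by (simp add: exp_of_nat_mult[symmetric])
    then show "1 \<le> exp 1 ^ length (filter P S) / exp a" by simp
  qed simp
  also have "\<dots> = (1 - ?q + ?q * exp 1) ^ s / exp a"
    using expectation_samples_power_count[of n s "exp 1" P] by simp
  also have "\<dots> \<le> exp (?q * (exp 1 - 1)) ^ s / exp a"
  proof (intro divide_right_mono power_mono)
    show "1 - ?q + ?q * exp 1 \<le> exp (?q * (exp 1 - 1))"
      using exp_ge_add_one_self[of "?q * (exp 1 - 1)"] by (simp add: algebra_simps)
    show "0 \<le> 1 - ?q + ?q * exp 1"
      using input_frac_le_1[of n P] input_frac_nonneg[of n P] by (smt (verit) exp_gt_zero mult_nonneg_nonneg)
  qed simp
  also have "\<dots> = exp (real s * ?q * (exp 1 - 1) - a)"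
    by (simp add: exp_of_nat_mult[symmetric] exp_diff mult_ac)
  also have "\<dots> \<le> exp (- a / 2)"
  proof -
    have "0 \<le> real s * ?q" using input_frac_nonneg[of n P] by simp
    then have "real s * ?q * (exp 1 - 1) \<le> (a / 4) * 2"
      using assms exp_le by (intro mult_mono) auto
    then show ?thesis by simp
  qed
  finally show ?thesis .
qed

lemma prob_samples_count_le:
  fixes a :: real
  shows "measure_pmf.prob (samples n s) {S. length (filter P S) \<le> a} \<le> exp (a - real s * input_frac n P / 2)"
proof -
  let ?q = "input_frac n P"
  have "measure_pmf.prob (samples n s) {S. length (filter P S) \<le> a}
      \<le> measure_pmf.expectation (samples n s) (\<lambda>S. exp a * exp (-1) ^ length (filter P S))"
  proof (rule measure_pmf_prob_le_expectation[OF finite_set_pmf_samples])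
    fix S assume "length (filter P S) \<le> a"
    then have "1 \<le> exp (a - length (filter P S))" by simp
    also have "\<dots> = exp a * exp (-1) ^ length (filter P S)"
      by (simp add: exp_diff exp_of_nat_mult[symmetric] exp_minus field_simps)
    finally show "1 \<le> exp a * exp (-1) ^ length (filter P S)" .
  qed simp
  also have "\<dots> = exp a * (1 - ?q + ?q * exp (-1)) ^ s"
    using expectation_samples_power_count[of n s "exp (-1)" P] by simp
  also have "\<dots> \<le> exp a * exp (- ?q / 2) ^ s"
  proof (intro mult_left_mono power_mono)
    have "exp (-1::real) \<le> 1 / 2"
      using exp_ge_add_one_self[of 1] by (simp add: exp_minus field_simps)
    then have "1 - ?q + ?q * exp (-1) \<le> 1 - ?q / 2"
      using mult_left_mono[of "exp (-1)" "1/2" ?q] input_frac_nonneg[of n P] by simp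
    also have "\<dots> \<le> exp (- ?q / 2)" using exp_ge_add_one_self[of "- ?q / 2"] by simp
    finally show "1 - ?q + ?q * exp (-1) \<le> exp (- ?q / 2)" .
    show "0 \<le> 1 - ?q + ?q * exp (-1)"
      using input_frac_le_1[of n P] input_frac_nonneg[of n P] by (smt (verit) exp_gt_zero mult_nonneg_nonneg)
  qed simp
  also have "exp (- ?q / 2) ^ s = exp (- (real s * ?q / 2))"
    by (simp add: exp_of_nat_mult[symmetric] mult_ac)
  also have "exp a * exp (- (real s * ?q / 2)) = exp (a - real s * ?q / 2)"
    by (simp add: exp_add[symmetric])
  finally show ?thesis .
qed

lemma prob_samples_count_eq_0:
  "measure_pmf.prob (samples n s) {S. length (filter P S) = 0} \<le> exp (- real s * input_frac n P)"
proof -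
  let ?q = "input_frac n P"
  have "measure_pmf.prob (samples n s) {S. length (filter P S) = 0}
      \<le> measure_pmf.expectation (samples n s) (\<lambda>S. (0::real) ^ length (filter P S))"
    by (rule measure_pmf_prob_le_expectation[OF finite_set_pmf_samples]) auto
  also have "\<dots> = (1 - ?q) ^ s" using expectation_samples_power_count[of n s 0 P] by simp
  also have "\<dots> \<le> exp (- ?q) ^ s"
    by (rule power_mono) (use exp_ge_add_one_self[of "- ?q"] input_frac_le_1[of n P] in auto)
  also have "\<dots> = exp (- real s * ?q)" by (simp add: exp_of_nat_mult[symmetric] mult_ac)
  finally show ?thesis .
qed

section \<open>Markov chains climbing through levels\<close>

fun iter_kernel :: "('a \<Rightarrow> 'a pmf) \<Rightarrow> nat \<Rightarrow> 'a \<Rightarrow> 'a pmf" where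
  "iter_kernel K 0 x = return_pmf x"
| "iter_kernel K (Suc t) x = K x \<bind> iter_kernel K t"

lemma iter_kernel_Suc': "iter_kernel K (Suc t) x = iter_kernel K t x \<bind> K"
proof (induction t arbitrary: x)
  case 0
  have "iter_kernel K 0 = return_pmf" by (rule ext) simp
  then show ?case by (simp add: bind_return_pmf bind_return_pmf')
next
  case (Suc t)
  have "iter_kernel K (Suc t) = (\<lambda>y. iter_kernel K t y \<bind> K)"
    using Suc.IH by (intro ext)
  then have "iter_kernel K (Suc (Suc t)) x = K x \<bind> (\<lambda>y. iter_kernel K t y \<bind> K)"
    by simp
  then show ?case by (simp add: bind_assoc_pmf)
qed

lemma iter_kernel_absorbing:
  assumes "K x = return_pmf x"
  shows "iter_kernel K t x = return_pmf x"
  using assms by (induction t) (simp_all add: bind_return_pmf)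

text \<open>A lower bound for the probability of being absorbed within t steps when starting at level k,
  for a chain that from levels below m stays at its level or higher except with probability
  \<delta> and climbs with probability at least p. Each step costs \<delta>; the potential term
  2^(m - k) (1 - p/2)^t is halved by every level climbed.\<close>

definition climb_bound :: "real \<Rightarrow> real \<Rightarrow> nat \<Rightarrow> nat \<Rightarrow> nat \<Rightarrow> real" where
  "climb_bound \<delta> p m t k = 1 - t * \<delta> - 2 ^ (m - k) * (1 - p / 2) ^ t"

context
  fixes \<delta> p :: real and m :: nat
  assumes \<delta>: "0 \<le> \<delta>" and p: "0 \<le> p" "p \<le> 1"
begin

lemma climb_bound_le_1: "climb_bound \<delta> p m t k \<le> 1"
proof -
  have "0 \<le> real t * \<delta>" "0 \<le> (2::real) ^ (m - k) * (1 - p / 2) ^ t" using \<delta> p by simp_all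
  then show ?thesis unfolding climb_bound_def by linarith
qed

lemma climb_bound_mono: "k \<le> j \<Longrightarrow> climb_bound \<delta> p m t k \<le> climb_bound \<delta> p m t j"
  unfolding climb_bound_def using p by (intro diff_mono order_refl mult_right_mono power_increasing) auto

lemma climb_bound_Suc_le: "climb_bound \<delta> p m (Suc t) k \<le> 1 - \<delta>"
proof -
  have "0 \<le> (2::real) ^ (m - k) * (1 - p / 2) ^ Suc t" "0 \<le> real t * \<delta>" using p \<delta> by simp_all
  moreover have "climb_bound \<delta> p m (Suc t) k = 1 - \<delta> - real t * \<delta> - 2 ^ (m - k) * (1 - p / 2) ^ Suc t"
    unfolding climb_bound_def by (simp add: algebra_simps)
  ultimately show ?thesis by linarith
qed

lemma climb_bound_Suc_le_step:
  assumes "k < m" "1 - \<delta> \<le> P0" "P0 \<le> 1" "p \<le> P1"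
  shows "climb_bound \<delta> p m (Suc t) k \<le> climb_bound \<delta> p m t k * P0
      + (climb_bound \<delta> p m t (Suc k) - climb_bound \<delta> p m t k) * P1"
proof -
  let ?a0 = "climb_bound \<delta> p m t k" and ?a1 = "climb_bound \<delta> p m t (Suc k)"
  have pow: "(2::real) ^ (m - k) = 2 * 2 ^ (m - Suc k)"
    using assms(1) by (simp add: Suc_diff_Suc flip: power_Suc)
  then have diff: "?a1 - ?a0 = 2 ^ (m - Suc k) * (1 - p / 2) ^ t"
    unfolding climb_bound_def by simp
  have "- \<delta> \<le> ?a0 * (P0 - 1)"
  proof (cases "0 \<le> ?a0")
    case True
    have "- \<delta> \<le> ?a0 * (- \<delta>)" using climb_bound_le_1 \<delta> True by (simp add: mult_left_le_one_le)
    also have "\<dots> \<le> ?a0 * (P0 - 1)" using True assms(2) by (intro mult_left_mono) auto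
    finally show ?thesis .
  next
    case False
    then have "0 \<le> ?a0 * (P0 - 1)" using assms(3) by (intro mult_nonpos_nonpos) auto
    then show ?thesis using \<delta> by linarith
  qed
  moreover have "(?a1 - ?a0) * p \<le> (?a1 - ?a0) * P1"
    using diff assms(4) p by (intro mult_left_mono) auto
  moreover have "climb_bound \<delta> p m (Suc t) k = ?a0 - \<delta> + (?a1 - ?a0) * p"
    using diff pow unfolding climb_bound_def by (simp add: algebra_simps)
  ultimately show ?thesis by (simp add: algebra_simps)
qed

end

lemma prob_iter_kernel_climb:
  fixes K :: "'a \<Rightarrow> 'a pmf" and lvl :: "'a \<Rightarrow> nat" and \<delta> p :: real
  assumes up: "\<And>k. up k = G \<union> {y \<in> A. k \<le> lvl y}"
    and absorbing: "\<And>x. x \<in> G \<Longrightarrow> K x = return_pmf x"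
    and stay: "\<And>x. x \<in> A \<Longrightarrow> lvl x < m \<Longrightarrow> 1 - \<delta> \<le> measure_pmf.prob (K x) (up (lvl x))"
    and climb: "\<And>x. x \<in> A \<Longrightarrow> lvl x < m \<Longrightarrow> p \<le> measure_pmf.prob (K x) (up (Suc (lvl x)))"
    and finish: "\<And>x. x \<in> A \<Longrightarrow> m \<le> lvl x \<Longrightarrow> 1 - \<delta> \<le> measure_pmf.prob (K x) G"
    and \<delta>: "0 \<le> \<delta>" and p: "0 \<le> p" "p \<le> 1"
    and x: "x \<in> A"
  shows "climb_bound \<delta> p m t (lvl x) \<le> measure_pmf.prob (iter_kernel K t x) G"
  using x
proof (induction t arbitrary: x)
  case 0
  have "climb_bound \<delta> p m 0 (lvl x) \<le> 0" unfolding climb_bound_def by simp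
  then show ?case by (meson measure_nonneg order_trans)
next
  case (Suc t)
  let ?g = "\<lambda>y. measure_pmf.prob (iter_kernel K t y) G" and ?k = "lvl x"
  have step: "measure_pmf.prob (iter_kernel K (Suc t) x) G = measure_pmf.expectation (K x) ?g"
    by (simp add: measure_pmf_prob_bind)
  have g_G: "1 \<le> ?g y" if "y \<in> G" for y
    using that iter_kernel_absorbing[of K y, OF absorbing[OF that]] by simp
  have g_up: "climb_bound \<delta> p m t j \<le> ?g y" if "y \<in> up j" for y j
  proof (cases "y \<in> G")
    case True
    then show ?thesis using g_G climb_bound_le_1[OF \<delta> p] order_trans by blast
  next
    case False
    with that have "y \<in> A" "j \<le> lvl y" unfolding up by auto
    then show ?thesis using Suc.IH climb_bound_mono[OF \<delta> p] order_trans by blast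
  qed
  show ?case
  proof (cases "m \<le> ?k")
    case True
    have "1 * measure_pmf.prob (K x) G \<le> measure_pmf.expectation (K x) ?g"
      by (rule expectation_ge_level) (use g_G in auto)
    then show ?thesis using finish[OF Suc.prems True] climb_bound_Suc_le[OF \<delta> p, of m t ?k] step
      by simp
  next
    case False
    have "climb_bound \<delta> p m t ?k * measure_pmf.prob (K x) (up ?k)
        + (climb_bound \<delta> p m t (Suc ?k) - climb_bound \<delta> p m t ?k) * measure_pmf.prob (K x) (up (Suc ?k))
        \<le> measure_pmf.expectation (K x) ?g"
      by (rule expectation_ge_two_level) (use g_up in \<open>auto simp: up\<close>)
    moreover have "climb_bound \<delta> p m (Suc t) ?k \<le> climb_bound \<delta> p m t ?k * measure_pmf.prob (K x) (up ?k)
        + (climb_bound \<delta> p m t (Suc ?k) - climb_bound \<delta> p m t ?k) * measure_pmf.prob (K x) (up (Suc ?k))"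
      using False stay[OF Suc.prems] climb[OF Suc.prems]
      by (intro climb_bound_Suc_le_step[OF \<delta> p]) auto
    ultimately show ?thesis using step by linarith
  qed
qed

section \<open>One iteration of RLS-GP\<close>

lemma rls_step_terminated: "rls_step n s ell h thr (X, True) = return_pmf (X, True)"
  unfolding rls_step_def by simp

lemma rls_run_eq_iter_kernel: "rls_run n s ell h thr T = iter_kernel (rls_step n s ell h thr) T (None, False)"
  by (induction T) (simp_all add: iter_kernel_Suc' del: iter_kernel.simps(2))

lemma set_pmf_rls_step_initial:
  assumes "thr < real s" "1 \<le> ell" "0 < n" "y \<in> set_pmf (rls_step n s ell h thr (None, False))"
  shows "\<exists>l<n. y = (Some (Lf l), False)"
proof -
  from assms(4) obtain S where S: "S \<in> set_pmf (samples n s)"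
    and y: "y \<in> set_pmf (if real (serr h None S) \<le> thr then return_pmf (None, True)
       else hvl n None \<bind> (\<lambda>X'. return_pmf
         (if leafcount X' \<le> ell \<and> serr h X' S \<le> serr h None S then X' else None, False)))"
    unfolding rls_step_def by auto
  have "serr h None S = s" using set_pmf_samples[OF S] unfolding serr_def agrees_def by simp
  with y assms(1) obtain X' where X': "X' \<in> set_pmf (hvl n None)"
    and y': "y = (if leafcount X' \<le> ell \<and> serr h X' S \<le> serr h None S then X' else None, False)"
    by auto
  from X' obtain l where "l < n" "X' = Some (Lf l)" unfolding hvl_def using assms(3) by auto
  moreover have "serr h X' S \<le> serr h None S" unfolding serr_def agrees_def by simp
  ultimately show ?thesis using y' assms(2) unfolding leafcount_def by auto
qed

text \<open>The threshold thr and the sample size s are such that each of the three bad events of an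
  iteration (stopping while the error exceeds \<gamma>, not stopping once the expected sampled error is
  at most thr/4, accepting a harmful offspring) has probability at most \<rho>.\<close>

locale rls_params =
  fixes b :: bool and n s ell :: nat and h :: "bool list \<Rightarrow> bool" and thr \<gamma> \<rho> :: real
  assumes target: "nary_gate b n h" and thr_nonneg: "0 \<le> thr"
    and early_stop: "exp (thr - real s * \<gamma> / 2) \<le> \<rho>"
    and late_stop: "exp (- thr / 8) \<le> \<rho>"
begin

definition success :: "(gp option \<times> bool) set" where
  "success = {(X, d). d \<and> generr n h X \<le> \<gamma>}"

definition live :: "(gp option \<times> bool) set" where
  "live = {(Some t, False) | t. pure_tree b n t}"

definition step_outcome :: "gp \<Rightarrow> gp option \<Rightarrow> bool list list \<Rightarrow> gp option \<times> bool" where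
  "step_outcome t X' S = (if real (serr h (Some t) S) \<le> thr then (Some t, True)
     else (if leafcount X' \<le> ell \<and> serr h X' S \<le> serr h (Some t) S then X' else Some t, False))"

lemma prob_rls_step: "measure_pmf.prob (rls_step n s ell h thr (Some t, False)) Q
   = measure_pmf.expectation (hvl n (Some t))
       (\<lambda>X'. measure_pmf.prob (samples n s) {S. step_outcome t X' S \<in> Q})"
proof -
  have "rls_step n s ell h thr (Some t, False)
      = samples n s \<bind> (\<lambda>S. hvl n (Some t) \<bind> (\<lambda>X'. return_pmf (step_outcome t X' S)))"
    unfolding rls_step_def step_outcome_def by (auto intro!: bind_pmf_cong)
  also have "\<dots> = hvl n (Some t) \<bind> (\<lambda>X'. map_pmf (step_outcome t X') (samples n s))"
    by (subst bind_commute_pmf) (simp add: map_pmf_def)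
  finally show ?thesis by (simp add: measure_pmf_prob_bind vimage_def)
qed

lemma rho_nonneg: "0 \<le> \<rho>"
  using late_stop exp_ge_zero order_trans by blast

lemma prob_early_stop:
  assumes "\<gamma> < generr n h (Some t)"
  shows "measure_pmf.prob (samples n s) {S. real (serr h (Some t) S) \<le> thr} \<le> \<rho>"
proof -
  have "measure_pmf.prob (samples n s) {S. real (serr h (Some t) S) \<le> thr}
      \<le> exp (thr - real s * generr n h (Some t) / 2)"
    unfolding serr_def generr_eq_input_frac by (rule prob_samples_count_le)
  also have "\<dots> \<le> exp (thr - real s * \<gamma> / 2)"
    using assms by (simp add: mult_left_mono)
  finally show ?thesis using early_stop by simp
qed

lemma prob_late_stop:
  assumes "real s * generr n h (Some t) \<le> thr / 4"
  shows "measure_pmf.prob (samples n s) {S. thr < real (serr h (Some t) S)} \<le> \<rho>"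
proof -
  have "measure_pmf.prob (samples n s) {S. thr < real (serr h (Some t) S)} \<le> exp (- thr / 2)"
    unfolding serr_def by (rule prob_samples_count_greater) (use assms in \<open>simp add: generr_eq_input_frac\<close>)
  also have "\<dots> \<le> exp (- thr / 8)" using thr_nonneg by simp
  finally show ?thesis using late_stop by simp
qed

text \<open>Either the current error is so small that the run stops anyway, or the training set
  hits the witness subcube and the harmful offspring is rejected.\<close>

lemma prob_accept_harmful:
  assumes pure: "pure_tree b n t" and "harmful n h t X'"
  shows "measure_pmf.prob (samples n s)
    {S. thr < real (serr h (Some t) S) \<and> serr h X' S \<le> serr h (Some t) S} \<le> \<rho>"
proof (cases "real s * generr n h (Some t) \<le> thr / 4")
  case True
  have "measure_pmf.prob (samples n s) {S. thr < real (serr h (Some t) S) \<and> serr h X' S \<le> serr h (Some t) S}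
     \<le> measure_pmf.prob (samples n s) {S. thr < real (serr h (Some t) S)}"
    by (rule measure_pmf.finite_measure_mono) auto
  also have "\<dots> \<le> \<rho>" by (rule prob_late_stop[OF True])
  finally show ?thesis .
next
  case False
  obtain R where dense: "generr n h (Some t) / 2 \<le> input_frac n R"
    and count: "\<And>S. serr h (Some t) S + length (filter R S) \<le> serr h X' S"
    using harmful_witness[OF pure target assms(2)] by blast
  have "{S. thr < real (serr h (Some t) S) \<and> serr h X' S \<le> serr h (Some t) S}
      \<subseteq> {S. length (filter R S) = 0}"
  proof
    fix S assume "S \<in> {S. thr < real (serr h (Some t) S) \<and> serr h X' S \<le> serr h (Some t) S}"
    then have "serr h X' S \<le> serr h (Some t) S" by simp
    then show "S \<in> {S. length (filter R S) = 0}" using count[of S] unfolding mem_Collect_eq by linarith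
  qed
  then have "measure_pmf.prob (samples n s)
      {S. thr < real (serr h (Some t) S) \<and> serr h X' S \<le> serr h (Some t) S}
      \<le> measure_pmf.prob (samples n s) {S. length (filter R S) = 0}"
    by (intro measure_pmf.finite_measure_mono) auto
  also have "\<dots> \<le> exp (- real s * input_frac n R)" by (rule prob_samples_count_eq_0)
  also have "\<dots> \<le> exp (- thr / 8)"
    using False mult_left_mono[OF dense, of "real s"] by simp
  finally show ?thesis using late_stop by simp
qed

definition progress :: "nat \<Rightarrow> (gp option \<times> bool) set" where
  "progress k = success \<union> {y \<in> live. k \<le> leafcount (fst y)}"

lemma progress_Some_False_iff:
  "(Some t', False) \<in> progress k \<longleftrightarrow> pure_tree b n t' \<and> k \<le> leaves t'"
  unfolding progress_def success_def live_def leafcount_def by auto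

lemma step_outcome_not_progress:
  assumes "step_outcome t X' S \<notin> progress k" "pure_tree b n t" "k \<le> leaves t"
  shows "(real (serr h (Some t) S) \<le> thr \<and> \<gamma> < generr n h (Some t))
    \<or> (thr < real (serr h (Some t) S) \<and> leafcount X' \<le> ell \<and> serr h X' S \<le> serr h (Some t) S
        \<and> step_outcome t X' S = (X', False))"
  using assms unfolding step_outcome_def progress_def success_def live_def leafcount_def
  by (auto split: if_splits)

lemma prob_outcome_classified:
  assumes pure: "pure_tree b n t" and X': "X' \<in> classified b n h t"
  shows "1 - 2 * \<rho> \<le> measure_pmf.prob (samples n s) {S. step_outcome t X' S \<in> progress (leaves t)}"
proof -
  let ?k = "leaves t"
  define early where "early = (if \<gamma> < generr n h (Some t) then {S. real (serr h (Some t) S) \<le> thr} else {})"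
  define accept where "accept = (if harmful n h t X'
    then {S. thr < real (serr h (Some t) S) \<and> serr h X' S \<le> serr h (Some t) S} else {})"
  have "measure_pmf.prob (samples n s) early \<le> \<rho>"
    unfolding early_def using prob_early_stop rho_nonneg by auto
  have "measure_pmf.prob (samples n s) accept \<le> \<rho>"
    unfolding accept_def using prob_accept_harmful[OF pure] rho_nonneg by auto
  have "{S. step_outcome t X' S \<notin> progress ?k} \<subseteq> early \<union> accept"
  proof
    fix S assume "S \<in> {S. step_outcome t X' S \<notin> progress ?k}"
    from step_outcome_not_progress[OF _ pure] this
    consider "real (serr h (Some t) S) \<le> thr" "\<gamma> < generr n h (Some t)"
      | "thr < real (serr h (Some t) S)" "serr h X' S \<le> serr h (Some t) S" "(X', False) \<notin> progress ?k"
      by (metis mem_Collect_eq order_refl)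
    then show "S \<in> early \<union> accept"
    proof cases
      case 2
      then have "harmful n h t X'"
        using X' unfolding classified_def improving_def neutral_def
        by (auto simp: progress_Some_False_iff)
      with 2 show ?thesis unfolding accept_def by auto
    qed (auto simp: early_def)
  qed
  then have "measure_pmf.prob (samples n s) {S. step_outcome t X' S \<notin> progress ?k}
      \<le> measure_pmf.prob (samples n s) (early \<union> accept)"
    by (intro measure_pmf.finite_measure_mono) auto
  also have "\<dots> \<le> measure_pmf.prob (samples n s) early + measure_pmf.prob (samples n s) accept"
    by (rule measure_Un_le) auto
  finally have "measure_pmf.prob (samples n s) {S. step_outcome t X' S \<notin> progress ?k} \<le> 2 * \<rho>"
    using \<open>measure_pmf.prob (samples n s) early \<le> \<rho>\<close> \<open>measure_pmf.prob (samples n s) accept \<le> \<rho>\<close>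
    by linarith
  then show ?thesis by (rule measure_pmf_prob_ge_1_minus)
qed

lemma prob_outcome_improving:
  assumes X': "improving b n h t X'" and ell: "Suc (leaves t) \<le> ell"
  shows "1 - \<rho> \<le> measure_pmf.prob (samples n s) {S. step_outcome t X' S \<in> progress (Suc (leaves t))}"
proof -
  let ?k = "Suc (leaves t)"
  from X' obtain t' where t': "X' = Some t'" "pure_tree b n t'" "leaves t' = ?k"
    and errors: "\<And>x. \<not> agrees h X' x \<Longrightarrow> \<not> agrees h (Some t) x"
    unfolding improving_def by blast
  define early where "early = (if \<gamma> < generr n h (Some t) then {S. real (serr h (Some t) S) \<le> thr} else {})"
  have "{S. step_outcome t X' S \<notin> progress ?k} \<subseteq> early"
  proof
    fix S assume S: "S \<in> {S. step_outcome t X' S \<notin> progress ?k}"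
    have "serr h X' S \<le> serr h (Some t) S"
      unfolding serr_def using errors by (induction S) auto
    moreover have "(X', False) \<in> progress ?k" using t' progress_Some_False_iff by simp
    ultimately show "S \<in> early"
      using S t' ell unfolding step_outcome_def early_def leafcount_def
      by (auto simp: progress_def success_def split: if_splits)
  qed
  then have "measure_pmf.prob (samples n s) {S. step_outcome t X' S \<notin> progress ?k}
      \<le> measure_pmf.prob (samples n s) early"
    by (intro measure_pmf.finite_measure_mono) auto
  also have "\<dots> \<le> \<rho>" unfolding early_def using prob_early_stop rho_nonneg by auto
  finally show ?thesis by (rule measure_pmf_prob_ge_1_minus)
qed

lemma prob_step_stays:
  assumes pure: "pure_tree b n t" and n: "leaves t < n"
  shows "1 - real (leaves t) / real n - 2 * \<rho>
    \<le> measure_pmf.prob (rls_step n s ell h thr (Some t, False)) (progress (leaves t))"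
proof -
  let ?k = "leaves t" and ?M = "hvl n (Some t)"
  let ?g = "\<lambda>X'. measure_pmf.prob (samples n s) {S. step_outcome t X' S \<in> progress ?k}"
  have "(1 - 2 * \<rho>) * measure_pmf.prob ?M (classified b n h t) \<le> measure_pmf.expectation ?M ?g"
    by (rule expectation_ge_level) (use prob_outcome_classified[OF pure] in auto)
  have fresh: "1 - real ?k / real n \<le> measure_pmf.prob ?M (classified b n h t)"
    using prob_hvl_classified[OF pure target n] n by (simp add: of_nat_diff field_simps)
  have "1 - real ?k / real n - 2 * \<rho> \<le> measure_pmf.expectation ?M ?g"
  proof (cases "0 \<le> 1 - 2 * \<rho>")
    case True
    have "1 - real ?k / real n - 2 * \<rho> \<le> (1 - 2 * \<rho>) * (1 - real ?k / real n)"
      using rho_nonneg by (simp add: algebra_simps)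
    also have "\<dots> \<le> (1 - 2 * \<rho>) * measure_pmf.prob ?M (classified b n h t)"
      using fresh True by (rule mult_left_mono)
    also have "\<dots> \<le> measure_pmf.expectation ?M ?g" by fact
    finally show ?thesis .
  next
    case False
    moreover have "0 \<le> measure_pmf.expectation ?M ?g" by (simp add: integral_nonneg_AE)
    moreover have "0 \<le> real ?k / real n" by simp
    ultimately show ?thesis by linarith
  qed
  then show ?thesis unfolding prob_rls_step .
qed

lemma prob_step_climbs:
  assumes pure: "pure_tree b n t" and n: "leaves t < n" and ell: "Suc (leaves t) \<le> ell" and "\<rho> \<le> 1"
  shows "(1 - \<rho>) * (real (n - leaves t) / (6 * real n))
    \<le> measure_pmf.prob (rls_step n s ell h thr (Some t, False)) (progress (Suc (leaves t)))"
proof -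
  let ?M = "hvl n (Some t)"
  have "(1 - \<rho>) * (real (n - leaves t) / (6 * real n))
      \<le> (1 - \<rho>) * measure_pmf.prob ?M {X'. improving b n h t X'}"
    using prob_hvl_improving[OF pure target n] \<open>\<rho> \<le> 1\<close> by (intro mult_left_mono) auto
  also have "\<dots> \<le> measure_pmf.expectation ?M
      (\<lambda>X'. measure_pmf.prob (samples n s) {S. step_outcome t X' S \<in> progress (Suc (leaves t))})"
    by (rule expectation_ge_level) (use prob_outcome_improving[OF _ ell] in auto)
  finally show ?thesis unfolding prob_rls_step .
qed

lemma prob_step_finishes:
  assumes pure: "pure_tree b n t"
    and small: "real s / 2 ^ leaves t \<le> thr / 4" "1 / 2 ^ leaves t \<le> \<gamma>" and "\<rho> \<le> 1"
  shows "1 - \<rho> \<le> measure_pmf.prob (rls_step n s ell h thr (Some t, False)) success"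
proof -
  have err: "generr n h (Some t) \<le> 1 / 2 ^ leaves t" by (rule generr_pure_tree_le[OF pure target])
  then have "real s * generr n h (Some t) \<le> real s / 2 ^ leaves t"
    using mult_left_mono[OF err, of "real s"] by simp
  with small(1) have "real s * generr n h (Some t) \<le> thr / 4" by linarith
  note late = prob_late_stop[OF this]
  have "1 - \<rho> \<le> measure_pmf.prob (samples n s) {S. step_outcome t X' S \<in> success}" for X'
  proof (rule measure_pmf_prob_ge_1_minus)
    have "{S. step_outcome t X' S \<notin> success} \<subseteq> {S. thr < real (serr h (Some t) S)}"
      using err small(2) unfolding step_outcome_def success_def by auto
    then have "measure_pmf.prob (samples n s) {S. step_outcome t X' S \<notin> success}
        \<le> measure_pmf.prob (samples n s) {S. thr < real (serr h (Some t) S)}"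
      by (rule measure_pmf.finite_measure_mono) simp
    with late show "measure_pmf.prob (samples n s) {S. step_outcome t X' S \<notin> success} \<le> \<rho>"
      by linarith
  qed
  then have "(1 - \<rho>) * measure_pmf.prob (hvl n (Some t)) UNIV \<le> measure_pmf.expectation (hvl n (Some t))
      (\<lambda>X'. measure_pmf.prob (samples n s) {S. step_outcome t X' S \<in> success})"
    by (intro expectation_ge_level) auto
  then show ?thesis unfolding prob_rls_step by simp
qed

lemma prob_rls_run_success:
  fixes m :: nat and \<delta> p :: real
  assumes stay: "\<And>k. k < m \<Longrightarrow> real k / real n + 2 * \<rho> \<le> \<delta>"
    and climb: "\<And>k. k < m \<Longrightarrow> p \<le> (1 - \<rho>) * (real (n - k) / (6 * real n))"
    and finish: "\<And>k. m \<le> k \<Longrightarrow> real s / 2 ^ k \<le> thr / 4 \<and> 1 / 2 ^ k \<le> \<gamma>"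
    and "0 < n" "m \<le> n" "m \<le> ell" "1 \<le> ell" "thr < real s" "\<rho> \<le> \<delta>" "\<rho> \<le> 1" "0 \<le> p" "p \<le> 1"
  shows "climb_bound \<delta> p m T 1 \<le> measure_pmf.prob (rls_run n s ell h thr (Suc T)) success"
proof -
  let ?K = "rls_step n s ell h thr" and ?lvl = "\<lambda>y :: gp option \<times> bool. leafcount (fst y)"
  have \<delta>: "0 \<le> \<delta>" using rho_nonneg \<open>\<rho> \<le> \<delta>\<close> by linarith
  have live: "x \<in> live \<Longrightarrow> \<exists>t. x = (Some t, False) \<and> pure_tree b n t \<and> ?lvl x = leaves t" for x
    unfolding live_def leafcount_def by auto
  have from_live: "climb_bound \<delta> p m T (?lvl x) \<le> measure_pmf.prob (iter_kernel ?K T x) success"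
    if "x \<in> live" for x
  proof (rule prob_iter_kernel_climb[where lvl = ?lvl, OF _ _ _ _ _ \<delta> \<open>0 \<le> p\<close> \<open>p \<le> 1\<close> that])
    show "progress k = success \<union> {y \<in> live. k \<le> ?lvl y}" for k
      unfolding progress_def ..
    show "?K x = return_pmf x" if "x \<in> success" for x
      using that rls_step_terminated unfolding success_def by auto
    show "1 - \<delta> \<le> measure_pmf.prob (?K x) (progress (?lvl x))" if "x \<in> live" "?lvl x < m" for x
      using live[OF that(1)] that(2) \<open>m \<le> n\<close> stay[OF that(2)] prob_step_stays by fastforce
    show "p \<le> measure_pmf.prob (?K x) (progress (Suc (?lvl x)))"
      if x: "x \<in> live" and below: "?lvl x < m" for x
    proof -
      obtain t where t: "x = (Some t, False)" "pure_tree b n t" "?lvl x = leaves t"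
        using live[OF x] by blast
      then have "leaves t < n" "Suc (leaves t) \<le> ell" using below \<open>m \<le> n\<close> \<open>m \<le> ell\<close> by auto
      from prob_step_climbs[OF t(2) this \<open>\<rho> \<le> 1\<close>] show ?thesis
        using climb[OF below] t by simp
    qed
    show "1 - \<delta> \<le> measure_pmf.prob (?K x) success" if "x \<in> live" "m \<le> ?lvl x" for x
      using live[OF that(1)] finish[OF that(2)] \<open>\<rho> \<le> \<delta>\<close> \<open>\<rho> \<le> 1\<close> prob_step_finishes by fastforce
  qed
  have "y \<in> live" "?lvl y = 1" if "y \<in> set_pmf (?K (None, False))" for y
    using set_pmf_rls_step_initial[OF \<open>thr < real s\<close> \<open>1 \<le> ell\<close> \<open>0 < n\<close> that]
    unfolding live_def pure_tree_def leafcount_def by auto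
  with from_live have "climb_bound \<delta> p m T 1 * measure_pmf.prob (?K (None, False)) UNIV
      \<le> measure_pmf.expectation (?K (None, False)) (\<lambda>y. measure_pmf.prob (iter_kernel ?K T y) success)"
    by (intro expectation_ge_level) (metis, auto)
  then show ?thesis
    unfolding rls_run_eq_iter_kernel iter_kernel.simps(2) measure_pmf_prob_bind by simp
qed

end

section \<open>Choice of the parameters\<close>

lemma two_powr_mult_log: "0 < n \<Longrightarrow> 2 powr (x * log 2 n) = n powr x"
  using powr_powr[of 2 "log 2 n" x] by (simp add: mult.commute)

lemma powr_le_two_power:
  assumes "0 < n" "x * log 2 n \<le> real k"
  shows "n powr x \<le> 2 ^ k"
  using assms powr_mono[OF assms(2), of 2] by (simp add: two_powr_mult_log powr_realpow)

lemma exp_neg_two_log_le: "1 \<le> n \<Longrightarrow> exp (- 2 * log 2 n) \<le> 1 / n"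
proof -
  assume n: "1 \<le> n"
  have "ln n * ln 2 \<le> ln n * 2" using ln_2_less_1 n by (intro mult_left_mono) auto
  then have "- 2 * log 2 n \<le> - ln n" by (simp add: log_def field_simps)
  then have "exp (- 2 * log 2 n) \<le> exp (- ln n)" by simp
  then show ?thesis using n by (simp add: exp_minus inverse_eq_divide)
qed

lemma nat_ceiling_bounds:
  assumes "0 \<le> x"
  shows "x \<le> real (nat \<lceil>x\<rceil>)" "real (nat \<lceil>x\<rceil>) \<le> x + 1"
proof -
  have "real (nat \<lceil>x\<rceil>) = of_int \<lceil>x\<rceil>" using assms by simp
  then show "x \<le> real (nat \<lceil>x\<rceil>)" "real (nat \<lceil>x\<rceil>) \<le> x + 1"
    using of_int_ceiling_le_add_one[of x] le_of_int_ceiling[of x] by linarith+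
qed

lemma ssize_bounds:
  "real n powr c * (log 2 n)\<^sup>2 \<le> ssize c n" "ssize c n \<le> real n powr c * (log 2 n)\<^sup>2 + 1"
  unfolding ssize_def by (simp_all add: nat_ceiling_bounds)

text \<open>For a pure tree with k leaves, 1 / 2^k bounds the error and s / 2^k the expected sampled
  error.\<close>

lemma ssize_div_two_power_le:
  fixes c :: real and n k :: nat
  defines "L \<equiv> log 2 (real n)"
  assumes c: "0 \<le> c" and L: "1 \<le> L" "L \<le> real n" and k: "(c + 1) * L \<le> real k"
  shows "real (ssize c n) / 2 ^ k \<le> L + 1" "1 / 2 ^ k \<le> real n powr - c"
proof -
  let ?N = "real n powr c * real n"
  have n: "1 \<le> real n" using L unfolding L_def by (cases "n = 0") (auto simp: log_def)
  have nc: "1 \<le> real n powr c" using n c by (simp add: ge_one_powr_ge_zero)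
  have "real n powr (c + 1) \<le> 2 ^ k" using k n unfolding L_def by (intro powr_le_two_power) auto
  moreover have "real n powr (c + 1) = ?N" using n by (simp add: powr_add)
  ultimately have N: "?N \<le> 2 ^ k" by simp
  have N1: "1 \<le> ?N" using mult_mono[OF nc n] by simp
  have "real (ssize c n) / 2 ^ k \<le> (real n powr c * L\<^sup>2 + 1) / ?N"
    using ssize_bounds(2)[where n = n and c = c] N N1 unfolding L_def by (intro frac_le) auto
  also have "\<dots> = L\<^sup>2 / real n + 1 / ?N" using nc by (simp add: add_divide_distrib)
  also have "\<dots> \<le> L + 1"
  proof -
    have "L\<^sup>2 / real n \<le> L" using L n by (simp add: power2_eq_square field_simps mult_left_mono)
    moreover have "1 / ?N \<le> 1" using N1 by simp
    ultimately show ?thesis by linarith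
  qed
  finally show "real (ssize c n) / 2 ^ k \<le> L + 1" .
  have "1 / 2 ^ k \<le> 1 / ?N" using N N1 by (intro divide_left_mono) auto
  also have "\<dots> \<le> 1 / real n powr c" using n nc by (intro divide_left_mono) auto
  finally show "1 / 2 ^ k \<le> real n powr - c" by (simp add: powr_minus_divide)
qed

lemma climb_prob_ge:
  fixes \<rho> :: real and n k :: nat
  assumes "\<rho> \<le> 1 / 28" "28 * real k \<le> real n" "k \<le> n" "0 < n"
  shows "1 / 7 \<le> (1 - \<rho>) * (real (n - k) / (6 * real n))"
proof -
  define Y where "Y = (1 - \<rho>) * (1 - real k / real n)"
  have "real k / real n \<le> 1 / 28" using assms(2,4) by (simp add: field_simps)
  then have "27 / 28 * (27 / 28) \<le> Y" unfolding Y_def using assms(1) by (intro mult_mono) auto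
  then have "729 / 784 \<le> Y" by simp
  moreover have "(1 - \<rho>) * (real (n - k) / (6 * real n)) = Y / 6"
    unfolding Y_def using assms(3,4) by (simp add: of_nat_diff field_simps)
  ultimately show ?thesis by linarith
qed

lemma power_mult_decay_le:
  fixes n c :: real
  assumes "1 \<le> n" "0 \<le> c" "real k \<le> (c + 1) * log 2 n" "10 * (c + 2) * log 2 n \<le> real t"
  shows "2 ^ k * (13 / 14) ^ t \<le> 1 / n"
proof -
  have "(2::real) ^ k = 2 powr real k" by (simp add: powr_realpow)
  also have "\<dots> \<le> 2 powr ((c + 1) * log 2 n)" using assms(3) by simp
  also have "\<dots> = n powr (c + 1)" using assms(1) by (simp add: two_powr_mult_log)
  finally have grow: "(2::real) ^ k \<le> n powr (c + 1)" .
  have "(13 / 14 :: real) ^ t = (13 / 14) powr (10 * (real t / 10))" by (simp add: powr_realpow)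
  also have "\<dots> = ((13 / 14) powr 10) powr (real t / 10)" by (rule powr_powr[symmetric])
  also have "\<dots> \<le> (1 / 2) powr (real t / 10)" by (intro powr_mono2) (auto simp: powr_numeral power_divide)
  also have "\<dots> \<le> (1 / 2) powr ((c + 2) * log 2 n)"
    using assms(4) by (intro powr_mono') (auto simp: algebra_simps)
  also have "\<dots> = 1 / 2 powr ((c + 2) * log 2 n)" by (simp add: powr_divide)
  also have "\<dots> = 1 / n powr (c + 2)" using assms(1) by (simp add: two_powr_mult_log)
  also have "\<dots> = n powr (- (c + 2))" by (rule powr_minus_divide[symmetric])
  finally have decay: "(13 / 14 :: real) ^ t \<le> n powr (- (c + 2))" .
  have "2 ^ k * (13 / 14) ^ t \<le> n powr (c + 1) * n powr (- (c + 2))"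
    using grow decay by (intro mult_mono) auto
  also have "\<dots> = n powr ((c + 1) + - (c + 2))" by (rule powr_add[symmetric])
  also have "\<dots> = 1 / n" using assms(1) by (simp add: powr_minus_divide)
  finally show ?thesis .
qed

lemma climb_bound_ge:
  fixes c :: real and n m T :: nat
  defines "L \<equiv> log 2 (real n)"
  assumes c: "0 \<le> c" and L: "1 \<le> L" and m: "1 \<le> m" "real m \<le> (c + 1) * L + 1"
    and T: "real T \<le> 10 * (c + 2) * L" "10 * (c + 2) * L \<le> real T + 1"
  shows "1 - (10 * (c + 2) * (c + 4) + 3) * L\<^sup>2 / real n
    \<le> climb_bound ((real m + 2) / real n) (1 / 7) m T 1"
proof -
  have n: "1 \<le> real n" using L unfolding L_def by (cases "n = 0") (auto simp: log_def)
  have "real T * (real m + 2) \<le> (10 * (c + 2) * L) * ((c + 4) * L)"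
    using c L m T by (intro mult_mono) (auto simp: algebra_simps)
  then have walk: "real T * ((real m + 2) / real n) \<le> 10 * (c + 2) * (c + 4) * L\<^sup>2 / real n"
    by (simp add: power2_eq_square divide_right_mono mult_ac)
  have "(2::real) ^ (m - 1) * (13 / 14) ^ T = 14 / 13 * (2 ^ (m - 1) * (13 / 14) ^ Suc T)" by simp
  also have "\<dots> \<le> 14 / 13 * (1 / real n)"
    using c m T n by (intro mult_left_mono power_mult_decay_le) (auto simp: L_def of_nat_diff)
  also have "\<dots> \<le> 3 * L\<^sup>2 / real n"
  proof -
    have "1 \<le> L\<^sup>2" using one_le_power[OF L, of 2] .
    then have "14 / 13 \<le> 3 * L\<^sup>2" by linarith
    from divide_right_mono[OF this, of "real n"] show ?thesis by simp
  qed
  finally show ?thesis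
    using walk unfolding climb_bound_def by (simp add: add_divide_distrib distrib_right)
qed

lemma rls_params_ssize:
  assumes "nary_gate b n h" "36 \<le> log 2 (real n)"
  shows "rls_params b n (ssize c n) h (16 * log 2 n) (real n powr - c) (exp (- 2 * log 2 n))"
proof
  let ?L = "log 2 (real n)"
  have n: "0 < real n" using assms(2) by (cases "n = 0") (auto simp: log_def)
  have "?L\<^sup>2 = real n powr c * ?L\<^sup>2 * real n powr - c" using n by (simp add: powr_minus field_simps)
  also have "\<dots> \<le> ssize c n * real n powr - c" using ssize_bounds(1) by (intro mult_right_mono) auto
  finally have "?L\<^sup>2 \<le> ssize c n * real n powr - c" .
  moreover have "36 * ?L \<le> ?L\<^sup>2" using assms(2) by (simp add: power2_eq_square mult_right_mono)
  ultimately have "16 * ?L - ssize c n * real n powr - c / 2 \<le> - 2 * ?L" by linarith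
  then show "exp (16 * ?L - ssize c n * real n powr - c / 2) \<le> exp (- 2 * ?L)" by simp
qed (use assms in auto)

text \<open>The parameters of the run: threshold 16 lg n, failure probability
  \<rho> = exp (-2 lg n) per bad event, target level m = (c + 1) lg n, climbing probability 1/7,
  and loss \<delta> = (m + 2) / n per iteration.\<close>

lemma prob_rls_run_ANDn_ORn:
  fixes c :: real and n ell :: nat
  defines "L \<equiv> log 2 (real n)"
  assumes c: "0 < c" and h: "h \<in> {ANDn n, ORn n}" and ell: "n \<le> ell"
    and L: "36 \<le> L" and n: "(c + 1) * L + 1 \<le> real n / 28"
  shows "measure_pmf.prob (rls_run n (ssize c n) ell h (16 * L) (nat \<lceil>10 * (c + 2) * L\<rceil>))
      {(X, d). d \<and> generr n h X \<le> real n powr (- c)} \<ge> 1 - (10 * (c + 2) * (c + 4) + 3) * L\<^sup>2 / real n"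
proof -
  define m where "m = nat \<lceil>(c + 1) * L\<rceil>"
  define T where "T = nat \<lceil>10 * (c + 2) * L\<rceil> - 1"
  obtain b where "nary_gate b n h" using h nary_gate_ANDn nary_gate_ORn by blast
  interpret rls_params b n "ssize c n" ell h "16 * L" "real n powr - c" "exp (- 2 * L)"
    unfolding L_def using \<open>nary_gate b n h\<close> L by (intro rls_params_ssize) (auto simp: L_def)
  have "0 \<le> c * L" using c L by simp
  then have n28: "28 \<le> real n" and Ln: "L \<le> real n" and cL: "(c + 1) * L \<ge> 1"
    using L n by (simp_all add: algebra_simps)
  have \<rho>: "exp (- 2 * L) \<le> 1 / real n" unfolding L_def using n28 by (intro exp_neg_two_log_le) auto
  also have "\<dots> \<le> 1 / 28" using n28 by (intro divide_left_mono) auto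
  finally have \<rho>28: "exp (- 2 * L) \<le> 1 / 28" .
  have m: "(c + 1) * L \<le> real m" "real m \<le> (c + 1) * L + 1"
    unfolding m_def using cL by (simp_all add: nat_ceiling_bounds)
  then have "1 \<le> m" "28 * real m \<le> real n" using cL n by linarith+
  have "1 \<le> 10 * (c + 2) * L" using cL L by (simp add: algebra_simps)
  with nat_ceiling_bounds[of "10 * (c + 2) * L"]
  have "1 \<le> real (nat \<lceil>10 * (c + 2) * L\<rceil>)" "10 * (c + 2) * L \<le> real (nat \<lceil>10 * (c + 2) * L\<rceil>)"
    "real (nat \<lceil>10 * (c + 2) * L\<rceil>) \<le> 10 * (c + 2) * L + 1" by auto
  then have T: "Suc T = nat \<lceil>10 * (c + 2) * L\<rceil>" "real T \<le> 10 * (c + 2) * L" "10 * (c + 2) * L \<le> real T + 1"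
    unfolding T_def by (simp_all add: of_nat_diff)
  have "16 * L < L * L" using L by (intro mult_strict_right_mono) auto
  also have "\<dots> \<le> real n powr c * (L * L)"
    using mult_right_mono[of 1 "real n powr c" "L * L"] n28 c by (simp add: ge_one_powr_ge_zero)
  also have "\<dots> \<le> ssize c n"
    using ssize_bounds(1)[where n = n and c = c] unfolding L_def by (simp add: power2_eq_square)
  finally have thr: "16 * L < ssize c n" .
  have "climb_bound ((real m + 2) / real n) (1 / 7) m T 1
      \<le> measure_pmf.prob (rls_run n (ssize c n) ell h (16 * L) (Suc T)) success"
  proof (rule prob_rls_run_success)
    show "real k / real n + 2 * exp (- 2 * L) \<le> (real m + 2) / real n" if "k < m" for k
      using that \<rho> divide_right_mono[of "real k" "real m" "real n"] by (simp add: add_divide_distrib)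
    show "1 / 7 \<le> (1 - exp (- 2 * L)) * (real (n - k) / (6 * real n))" if "k < m" for k
      using that \<rho>28 n28 \<open>28 * real m \<le> real n\<close> by (intro climb_prob_ge) auto
    show "real (ssize c n) / 2 ^ k \<le> 16 * L / 4 \<and> 1 / 2 ^ k \<le> real n powr - c" if "m \<le> k" for k
      using ssize_div_two_power_le[of c n k] that m c L Ln unfolding L_def by auto
    show "exp (- 2 * L) \<le> (real m + 2) / real n"
      using \<rho> divide_right_mono[of 1 "real m + 2" "real n"] by auto
  qed (use ell n28 L \<rho>28 \<open>28 * real m \<le> real n\<close> thr in auto)
  moreover have "1 - (10 * (c + 2) * (c + 4) + 3) * L\<^sup>2 / real n
      \<le> climb_bound ((real m + 2) / real n) (1 / 7) m T 1"
    using c L m T \<open>1 \<le> m\<close> unfolding L_def by (intro climb_bound_ge) auto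
  ultimately show ?thesis using T(1) unfolding success_def by simp
qed

theorem theorem8:
  fixes c :: real
  assumes "c > 0"
  shows "\<exists>c'>0. \<exists>C1 C2::real. \<exists>N::nat. \<forall>n\<ge>N. \<forall>ell\<ge>n. \<forall>h\<in>{ANDn n, ORn n}.
    measure_pmf.prob (rls_run n (ssize c n) ell h (c' * log 2 (real n)) (nat \<lceil>C1 * log 2 (real n)\<rceil>))
       {(X, d). d \<and> generr n h X \<le> real n powr (- c)}
    \<ge> 1 - C2 * (log 2 (real n))\<^sup>2 / real n"
proof -
  have "eventually (\<lambda>n. 36 \<le> log 2 (real n)) sequentially"
    and "eventually (\<lambda>n. (c + 1) * log 2 (real n) + 1 \<le> real n / 28) sequentially"
    by real_asymp+
  then have "eventually (\<lambda>n. 36 \<le> log 2 (real n) \<and> (c + 1) * log 2 (real n) + 1 \<le> real n / 28)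
      sequentially" by (rule eventually_conj)
  then obtain N where "\<And>n. N \<le> n \<Longrightarrow> 36 \<le> log 2 (real n) \<and> (c + 1) * log 2 (real n) + 1 \<le> real n / 28"
    unfolding eventually_sequentially by blast
  then show ?thesis
    using prob_rls_run_ANDn_ORn[OF assms]
    by (intro exI[of _ "16::real"] conjI exI[of _ "10 * (c + 2)"] exI[of _ "10 * (c + 2) * (c + 4) + 3"]
        exI[of _ N]) auto
qed

end
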